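(* Let $n,m\ge1$, $\eta>0$, $t\in(0,1)$, let $f_i:\mathbb{R}^d\to\mathbb{R}$ ($i=1,\dots,n$) be $\alpha_{f_i}$-strongly convex and $g_j:\mathbb{R}^d\to\mathbb{R}$ ($j=1,\dots,m$) be $\alpha_{g_j}$-strongly convex, and let $\sigma_{ij}\in[0,1]$ with $\sum_{i}\sigma_{ij}>0$ for every $j$ and $\sum_j\sigma_{ij}>0$ for every $i$. For $\mathbf x=(x_1,\dots,x_n)$, $\mathbf y=(y_1,\dots,y_m)$, $\mathbf z=(z^1,\dots,z^m)$ with all components in $\mathbb{R}^d$, define $$\pi_t(\mathbf x,\mathbf y,\mathbf z)\propto\exp\Big[-\sum_{i=1}^nf_i(x_i)-\sum_{j=1}^mg_j(y_j)-\sum_{i,j}\frac{\sigma_{ij}}{2\eta}\|x_i-y_j\|_2^2-\sum_{j=1}^m\frac{\sum_{i=1}^n\sigma_{ij}}{2t(1-t)\eta}\Big\|z^j-ty_j-(1-t)\frac{\sum_{i=1}^n\sigma_{ij}x_i}{\sum_{i=1}^n\sigma_{ij}}\Big\|_2^2\Big].$$ Then the $\mathbf z$-marginal $\pi_t(\mathbf z)\propto\int\pi_t(\mathbf x,\mathbf y,\mathbf z)\,\mathrm d\mathbf x\,\mathrm d\mathbf y$ is strongly log-concave with constant $$c_t=\Big[\frac{\eta t(1-t)}{\min_j\sum_{i=1}^n\sigma_{ij}}+\frac{mn(1-t)^2}{\min_i\alpha_{f_i}}+\frac{t^2}{\min_j\alpha_{g_j}}\Big]^{-1}.$$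
   Context: A density $p$ is strongly log-concave with constant $c>0$ if $-\log p$ is $c$-strongly convex, i.e. $-\log p(x)+\log p(y)\ge \langle -\nabla\log p(y),x-y\rangle+\frac c2\|x-y\|^2$ for all $x,y$. *)

theory Defs
  imports "HOL-Analysis.Analysis"
begin

definition strongly_convex :: "real \<Rightarrow> ('a::real_inner \<Rightarrow> real) \<Rightarrow> bool" where
  "strongly_convex c f \<longleftrightarrow>
     (\<forall>u v s. 0 \<le> s \<and> s \<le> 1 \<longrightarrow>
        f (s *\<^sub>R u + (1 - s) *\<^sub>R v)
          \<le> s * f u + (1 - s) * f v - c / 2 * s * (1 - s) * (norm (u - v))\<^sup>2)"

definition strongly_log_concave :: "real \<Rightarrow> ('a::real_inner \<Rightarrow> real) \<Rightarrow> bool" where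
  "strongly_log_concave c p \<longleftrightarrow> c > 0 \<and> (\<forall>z. p z > 0) \<and> strongly_convex c (\<lambda>z. - ln (p z))"

text \<open>Potential (negative log of the unnormalised joint density) of pi_t.
  Points x = (x_i)_{i::'n}, y = (y_j)_{j::'m}, z = (z^j)_{j::'m} in R^d = 'a.\<close>
definition potential_t ::
  "real \<Rightarrow> real \<Rightarrow> ('n::finite \<Rightarrow> 'm::finite \<Rightarrow> real) \<Rightarrow> ('n \<Rightarrow> 'a::euclidean_space \<Rightarrow> real)
    \<Rightarrow> ('m \<Rightarrow> 'a \<Rightarrow> real) \<Rightarrow> 'a^'n \<Rightarrow> 'a^'m \<Rightarrow> 'a^'m \<Rightarrow> real" where
  "potential_t \<eta> t \<sigma> f g x y z =
     (\<Sum>i\<in>UNIV. f i (x $ i)) + (\<Sum>j\<in>UNIV. g j (y $ j))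
     + (\<Sum>i\<in>UNIV. \<Sum>j\<in>UNIV. \<sigma> i j / (2 * \<eta>) * (norm (x $ i - y $ j))\<^sup>2)
     + (\<Sum>j\<in>UNIV. (\<Sum>i\<in>UNIV. \<sigma> i j) / (2 * t * (1 - t) * \<eta>) *
          (norm (z $ j - t *\<^sub>R y $ j
                 - (1 - t) *\<^sub>R ((1 / (\<Sum>i\<in>UNIV. \<sigma> i j)) *\<^sub>R (\<Sum>i\<in>UNIV. \<sigma> i j *\<^sub>R x $ i))))\<^sup>2)"

definition z_marginal ::
  "real \<Rightarrow> real \<Rightarrow> ('n::finite \<Rightarrow> 'm::finite \<Rightarrow> real) \<Rightarrow> ('n \<Rightarrow> 'a::euclidean_space \<Rightarrow> real)
    \<Rightarrow> ('m \<Rightarrow> 'a \<Rightarrow> real) \<Rightarrow> 'a^'m \<Rightarrow> real" where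
  "z_marginal \<eta> t \<sigma> f g z =
     enn2real (\<integral>\<^sup>+ xy. ennreal (exp (- potential_t \<eta> t \<sigma> f g (fst xy) (snd xy) z)) \<partial>lborel)
     / enn2real (\<integral>\<^sup>+ xyz. ennreal (exp (- potential_t \<eta> t \<sigma> f g (fst xyz) (fst (snd xyz)) (snd (snd xyz)))) \<partial>lborel)"

end

theory Submission
  imports Defs "HOL-Probability.Distributions"
begin

(* The joint potential V(x, y, z) of pi_t satisfies
     V(s u + (1 - s) v) <= s V(u) + (1 - s) V(v) - s (1 - s) Q(u - v)
   for a quadratic modulus Q collecting the strong convexity of the f_i and g_j and the exactly
   quadratic bridge term; the coupling term is merely convex. Splitting z^j into the residual
   z^j - t y_j - (1 - t) xbar_j, the weighted mean (1 - t) xbar_j and t y_j, a weighted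
   Cauchy-Schwarz inequality gives Q(d) >= c_t/2 |d_z|^2. Hence V(x, y, z) - c_t/2 |z|^2 is jointly
   convex, and Prekopa's theorem (marginals of log-concave densities are log-concave) shows that the
   z-marginal is exp(-c_t/2 |z|^2) times a log-concave function.
   Prekopa's theorem is obtained by integrating out one coordinate at a time with the one-dimensional
   Prekopa-Leindler inequality, itself a consequence of the layer-cake formula and the Brunn-Minkowski
   inequality for intervals. Strong convexity provides the Gaussian tails that keep every integral
   finite. *)

section \<open>Log-concave functions and the Prekopa--Leindler inequality on the line\<close>

definition log_concave :: "('v::real_vector \<Rightarrow> real) \<Rightarrow> bool" where
  "log_concave F \<longleftrightarrow>
     (\<forall>u v s. 0 < s \<and> s < 1 \<longrightarrow> F u powr s * F v powr (1 - s) \<le> F (s *\<^sub>R u + (1 - s) *\<^sub>R v))"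

lemma log_concaveD:
  "log_concave F \<Longrightarrow> 0 < s \<Longrightarrow> s < 1 \<Longrightarrow>
    F u powr s * F v powr (1 - s) \<le> F (s *\<^sub>R u + (1 - s) *\<^sub>R v)"
  by (simp add: log_concave_def)

lemma powr_mult_strict_mono:
  fixes a b c d s :: real
  assumes "0 < a" "a < c" "0 < b" "b < d" "0 < s" "s < 1"
  shows "a powr s * b powr (1 - s) < c powr s * d powr (1 - s)"
  using assms by (intro mult_strict_mono powr_less_mono2) auto

lemma powr_mult_le_weighted_mean:
  fixes a b s :: real
  assumes "0 \<le> a" "0 \<le> b" "0 \<le> s" "s \<le> 1"
  shows "a powr s * b powr (1 - s) \<le> s * a + (1 - s) * b"
proof (cases "a = 0 \<or> b = 0")
  case True
  then show ?thesis using assms by auto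
next
  case False
  then show ?thesis using assms by (intro Youngs_inequality_0) auto
qed

lemma log_concave_superlevel_is_interval:
  fixes F :: "real \<Rightarrow> real"
  assumes F: "log_concave F" and l: "0 < l"
  shows "is_interval {y. l < F y}"
  unfolding is_interval_1
proof (intro ballI allI impI)
  fix a b x assume a: "a \<in> {y. l < F y}" and b: "b \<in> {y. l < F y}" and x: "a \<le> x \<and> x \<le> b"
  consider "x = a \<or> x = b" | "a < x" "x < b" using x by linarith
  then show "x \<in> {y. l < F y}"
  proof cases
    case 2
    define s where "s = (b - x) / (b - a)"
    have s: "0 < s" "s < 1" using 2 by (auto simp: s_def field_simps)
    have "s * (b - a) = b - x" using 2 by (simp add: s_def)
    moreover have "s * a + (1 - s) * b = b - s * (b - a)" by (simp add: algebra_simps)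
    ultimately have x_eq: "s *\<^sub>R a + (1 - s) *\<^sub>R b = x" by simp
    have "l = l powr s * l powr (1 - s)" using l by (simp add: powr_add[symmetric])
    also have "\<dots> < F a powr s * F b powr (1 - s)"
      using a b l s by (intro powr_mult_strict_mono) auto
    also have "\<dots> \<le> F x" using log_concaveD[OF F s, of a b] x_eq by simp
    finally show ?thesis by simp
  qed (use a b in auto)
qed

lemma log_concave_borel_measurable:
  fixes F :: "real \<Rightarrow> real"
  assumes F: "log_concave F" and F0: "\<And>y. 0 \<le> F y"
  shows "F \<in> borel_measurable borel"
proof -
  have "{y. l < F y} \<in> sets borel" if "0 < l" for l
    using real_interval_borel_measurable[OF log_concave_superlevel_is_interval[OF F that]] .
  moreover have "{y. 0 < F y} = (\<Union>n. {y. 1 / real (Suc n) < F y})"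
  proof safe
    fix y assume "0 < F y"
    then obtain n where "inverse (real (Suc n)) < F y" using reals_Archimedean by blast
    then show "y \<in> (\<Union>n. {y. 1 / real (Suc n) < F y})" by (auto simp: inverse_eq_divide)
  next
    fix y n assume "1 / real (Suc n) < F y"
    moreover have "0 < 1 / real (Suc n)" by simp
    ultimately show "0 < F y" by linarith
  qed
  moreover have "{y. l < F y} = UNIV" if "l < 0" for l
    using F0 that by (auto intro: less_le_trans)
  ultimately have "{y. l < F y} \<in> sets borel" for l
    by (cases "0 < l"; cases "l < 0") (auto simp: not_less)
  then show ?thesis by (simp add: borel_measurable_iff_greater)
qed

lemma emeasure_lborel_le_diameter:
  fixes S :: "real set"
  assumes "S \<noteq> {}" and diam: "\<And>a b. a \<in> S \<Longrightarrow> b \<in> S \<Longrightarrow> b - a \<le> r"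
  shows "emeasure lborel S \<le> ennreal r"
proof -
  obtain a0 where a0: "a0 \<in> S" using assms(1) by auto
  have "bdd_above S" using diam[OF a0] by (intro bdd_aboveI[of _ "a0 + r"]) force
  moreover have "bdd_below S" using diam[OF _ a0] by (intro bdd_belowI[of _ "a0 - r"]) force
  ultimately have sub: "S \<subseteq> {Inf S .. Sup S}" by (auto intro: cInf_lower cSup_upper)
  have "Sup S \<le> a + r" if "a \<in> S" for a
    using assms(1) by (intro cSup_least) (use diam[OF that] in force)+
  then have "Sup S - r \<le> Inf S" using assms(1) by (intro cInf_greatest) force+
  moreover have "Inf S \<le> Sup S" using sub a0 by auto
  ultimately have "emeasure lborel S \<le> ennreal (Sup S - Inf S)"
    using emeasure_mono[OF sub, of lborel] by simp
  also have "\<dots> \<le> ennreal r" using \<open>Sup S - r \<le> Inf S\<close> by (intro ennreal_leI) simp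
  finally show ?thesis .
qed

lemma exists_pair_dist_ge_emeasure:
  fixes A :: "real set"
  assumes "A \<noteq> {}" "emeasure lborel A < \<infinity>" "0 < e"
  shows "\<exists>a1 a2. a1 \<in> A \<and> a2 \<in> A \<and> a1 \<le> a2 \<and> enn2real (emeasure lborel A) - e \<le> a2 - a1"
proof (rule ccontr)
  define r where "r = enn2real (emeasure lborel A) - e"
  assume "\<not> ?thesis"
  then have short: "\<And>a1 a2. a1 \<in> A \<Longrightarrow> a2 \<in> A \<Longrightarrow> a1 \<le> a2 \<Longrightarrow> a2 - a1 < r"
    unfolding r_def by force
  obtain a0 where "a0 \<in> A" using assms(1) by auto
  then have r: "0 < r" using short by force
  have "b - a \<le> r" if "a \<in> A" "b \<in> A" for a b
    using short[OF that] r by (cases "a \<le> b") auto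
  then have "emeasure lborel A \<le> ennreal r"
    by (rule emeasure_lborel_le_diameter[OF assms(1)])
  moreover have "ennreal r < emeasure lborel A"
    using assms r unfolding r_def by (cases "emeasure lborel A") (auto simp: ennreal_less_iff)
  ultimately show False by simp
qed

lemma convex_combination_interval_subset:
  fixes A B C :: "real set"
  assumes A: "is_interval A" and B: "is_interval B" and s: "0 \<le> s" "s \<le> 1"
    and C: "\<And>a b. a \<in> A \<Longrightarrow> b \<in> B \<Longrightarrow> s * a + (1 - s) * b \<in> C"
    and a: "a1 \<in> A" "a2 \<in> A" "a1 \<le> a2" and b: "b1 \<in> B" "b2 \<in> B" "b1 \<le> b2"
  shows "{s * a1 + (1 - s) * b1 .. s * a2 + (1 - s) * b2} \<subseteq> C"
proof
  fix x assume x: "x \<in> {s * a1 + (1 - s) * b1 .. s * a2 + (1 - s) * b2}"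
  define lo hi where "lo = s * a1 + (1 - s) * b1" and "hi = s * a2 + (1 - s) * b2"
  show "x \<in> C"
  proof (cases "lo = hi")
    case True
    then show ?thesis using x C a b by (auto simp: lo_def hi_def)
  next
    case False
    then have lh: "lo < hi" using x by (simp add: lo_def hi_def)
    \<comment> \<open>move the same fraction \<open>\<theta>\<close> along \<open>[a1, a2]\<close> and \<open>[b1, b2]\<close>\<close>
    define \<theta> where "\<theta> = (x - lo) / (hi - lo)"
    have \<theta>: "0 \<le> \<theta>" "\<theta> \<le> 1" using x lh by (auto simp: \<theta>_def lo_def[symmetric] hi_def[symmetric])
    have "\<theta> * (a2 - a1) \<le> a2 - a1" "\<theta> * (b2 - b1) \<le> b2 - b1"
      "0 \<le> \<theta> * (a2 - a1)" "0 \<le> \<theta> * (b2 - b1)"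
      using \<theta> a(3) b(3) by (simp_all add: mult_left_le_one_le)
    then have "a1 \<le> a1 + \<theta> * (a2 - a1)" "a1 + \<theta> * (a2 - a1) \<le> a2"
      "b1 \<le> b1 + \<theta> * (b2 - b1)" "b1 + \<theta> * (b2 - b1) \<le> b2" by linarith+
    then have "a1 + \<theta> * (a2 - a1) \<in> A" "b1 + \<theta> * (b2 - b1) \<in> B"
      using A B a b unfolding is_interval_1 by blast+
    moreover have "s * (a1 + \<theta> * (a2 - a1)) + (1 - s) * (b1 + \<theta> * (b2 - b1)) = lo + \<theta> * (hi - lo)"
      by (simp add: lo_def hi_def algebra_simps)
    moreover have "lo + \<theta> * (hi - lo) = x" using lh by (simp add: \<theta>_def)
    ultimately show ?thesis using C by metis
  qed
qed

lemma brunn_minkowski_intervals: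
  fixes A B C :: "real set"
  assumes A: "is_interval A" "A \<noteq> {}" "emeasure lborel A < \<infinity>"
    and B: "is_interval B" "B \<noteq> {}" "emeasure lborel B < \<infinity>"
    and s: "0 < s" "s < 1"
    and C: "C \<in> sets borel" "\<And>a b. a \<in> A \<Longrightarrow> b \<in> B \<Longrightarrow> s * a + (1 - s) * b \<in> C"
  shows "ennreal s * emeasure lborel A + ennreal (1 - s) * emeasure lborel B \<le> emeasure lborel C"
proof (cases "emeasure lborel C = \<infinity>")
  case False
  define mA mB mC where "mA = enn2real (emeasure lborel A)" and "mB = enn2real (emeasure lborel B)"
    and "mC = enn2real (emeasure lborel C)"
  have eq: "emeasure lborel A = ennreal mA" "emeasure lborel B = ennreal mB" "emeasure lborel C = ennreal mC"
    using A(3) B(3) False by (simp_all add: mA_def mB_def mC_def ennreal_enn2real_if less_top)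
  have "s * mA + (1 - s) * mB \<le> mC"
  proof (rule field_le_epsilon)
    fix e :: real assume "0 < e"
    obtain a1 a2 where a: "a1 \<in> A" "a2 \<in> A" "a1 \<le> a2" "mA - e \<le> a2 - a1"
      using exists_pair_dist_ge_emeasure[OF A(2,3) \<open>0 < e\<close>] unfolding mA_def by blast
    obtain b1 b2 where b: "b1 \<in> B" "b2 \<in> B" "b1 \<le> b2" "mB - e \<le> b2 - b1"
      using exists_pair_dist_ge_emeasure[OF B(2,3) \<open>0 < e\<close>] unfolding mB_def by blast
    have le: "s * a1 + (1 - s) * b1 \<le> s * a2 + (1 - s) * b2"
      using a b s by (intro add_mono mult_left_mono) auto
    have "ennreal ((s * a2 + (1 - s) * b2) - (s * a1 + (1 - s) * b1)) \<le> emeasure lborel C"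
      using emeasure_mono[OF convex_combination_interval_subset[OF A(1) B(1) _ _ C(2) a(1-3) b(1-3)], of lborel]
        s C(1) le by simp
    then have "(s * a2 + (1 - s) * b2) - (s * a1 + (1 - s) * b1) \<le> mC"
      unfolding eq by (simp add: ennreal_le_iff mC_def)
    moreover have "s * (mA - e) + (1 - s) * (mB - e) \<le> s * (a2 - a1) + (1 - s) * (b2 - b1)"
      using a b s by (intro add_mono mult_left_mono) auto
    ultimately show "s * mA + (1 - s) * mB \<le> mC + e" by (simp add: algebra_simps)
  qed
  then have "ennreal (s * mA + (1 - s) * mB) \<le> ennreal mC" by (rule ennreal_leI)
  moreover have "0 \<le> mA" "0 \<le> mB" by (simp_all add: mA_def mB_def)
  ultimately show ?thesis
    unfolding eq using s by (simp add: ennreal_mult ennreal_plus)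
qed simp

lemma nn_integral_layer_cake:
  fixes f :: "real \<Rightarrow> real"
  assumes [measurable]: "f \<in> borel_measurable borel" and f0: "\<And>y. 0 \<le> f y"
  shows "(\<integral>\<^sup>+y. ennreal (f y) \<partial>lborel)
    = (\<integral>\<^sup>+t. indicator {0<..} t * emeasure lborel {y. t < f y} \<partial>lborel)"
proof -
  have "(\<integral>\<^sup>+y. ennreal (f y) \<partial>lborel) = (\<integral>\<^sup>+y. (\<integral>\<^sup>+t. indicator {0<..<f y} t \<partial>lborel) \<partial>lborel)"
    using f0 by (intro nn_integral_cong) simp
  also have "\<dots> = (\<integral>\<^sup>+t. (\<integral>\<^sup>+y. indicator {0<..<f y} t \<partial>lborel) \<partial>lborel)"
  proof (rule lborel_pair.Fubini')
    have "{p \<in> space (lborel \<Otimes>\<^sub>M lborel). 0 < fst p \<and> fst p < f (snd p)} \<in> sets (lborel \<Otimes>\<^sub>M lborel)"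
      by measurable
    then show "(\<lambda>(t, y). indicator {0<..<f y} t :: ennreal) \<in> borel_measurable (lborel \<Otimes>\<^sub>M lborel)"
      by (subst measurable_cong[where g="indicator {p \<in> space (lborel \<Otimes>\<^sub>M lborel). 0 < fst p \<and> fst p < f (snd p)}"])
        (auto simp: indicator_def split: prod.splits)
  qed
  also have "\<dots> = (\<integral>\<^sup>+t. indicator {0<..} t * emeasure lborel {y. t < f y} \<partial>lborel)"
  proof (rule nn_integral_cong)
    fix t :: real
    have "(\<integral>\<^sup>+y. indicator {0<..<f y} t \<partial>lborel) = (\<integral>\<^sup>+y. indicator {0<..} t * indicator {y. t < f y} y \<partial>lborel)"
      by (intro nn_integral_cong) (auto simp: indicator_def)
    then show "(\<integral>\<^sup>+y. indicator {0<..<f y} t \<partial>lborel) = indicator {0<..} t * emeasure lborel {y. t < f y}"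
      by (simp add: nn_integral_cmult)
  qed
  finally show ?thesis .
qed

lemma borel_measurable_emeasure_superlevel:
  fixes f :: "real \<Rightarrow> real"
  assumes [measurable]: "f \<in> borel_measurable borel"
  shows "(\<lambda>t. emeasure lborel {y. t < f y}) \<in> borel_measurable borel"
proof -
  define Q where "Q = {p \<in> space (lborel \<Otimes>\<^sub>M lborel). fst p < f (snd p)}"
  have "Q \<in> sets (lborel \<Otimes>\<^sub>M lborel)" unfolding Q_def by measurable
  moreover have "\<And>t. Pair t -` Q = {y. t < f y}" unfolding Q_def by (auto simp: space_pair_measure)
  ultimately show ?thesis using lborel.measurable_emeasure_Pair[of Q] by simp
qed

definition unit_layer_integral :: "(real \<Rightarrow> real) \<Rightarrow> real \<Rightarrow> ennreal" where
  "unit_layer_integral F M = (\<integral>\<^sup>+l. indicator {0<..<1} l * emeasure lborel {y. M * l < F y} \<partial>lborel)"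

lemma nn_integral_layer_cake_rescaled:
  fixes f :: "real \<Rightarrow> real"
  assumes "f \<in> borel_measurable borel" "0 < M"
  shows "(\<integral>\<^sup>+t. indicator {0<..<M} t * emeasure lborel {y. t < f y} \<partial>lborel)
    = ennreal M * unit_layer_integral f M"
proof -
  have "(\<integral>\<^sup>+t. indicator {0<..<M} t * emeasure lborel {y. t < f y} \<partial>lborel)
    = ennreal \<bar>M\<bar> * (\<integral>\<^sup>+l. indicator {0<..<M} (0 + M * l) * emeasure lborel {y. 0 + M * l < f y} \<partial>lborel)"
    using assms borel_measurable_emeasure_superlevel[OF assms(1)] by (intro nn_integral_real_affine) auto
  also have "\<dots> = ennreal M * unit_layer_integral f M"
    using assms unfolding unit_layer_integral_def
    by (auto intro!: arg_cong2[where f="(*)"] nn_integral_cong simp: indicator_def zero_less_mult_iff)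
  finally show ?thesis .
qed

lemma nn_integral_ge_unit_layer_integral:
  fixes f :: "real \<Rightarrow> real"
  assumes "f \<in> borel_measurable borel" "\<And>y. 0 \<le> f y" "0 < M"
  shows "ennreal M * unit_layer_integral f M \<le> (\<integral>\<^sup>+y. ennreal (f y) \<partial>lborel)"
  unfolding nn_integral_layer_cake[OF assms(1,2)] nn_integral_layer_cake_rescaled[OF assms(1,3), symmetric]
  by (intro nn_integral_mono mult_right_mono) (auto simp: indicator_def)

lemma nn_integral_eq_unit_layer_integral:
  fixes f :: "real \<Rightarrow> real"
  assumes "f \<in> borel_measurable borel" "\<And>y. 0 \<le> f y" "0 < M" and le: "\<And>y. f y \<le> M"
  shows "(\<integral>\<^sup>+y. ennreal (f y) \<partial>lborel) = ennreal M * unit_layer_integral f M"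
  unfolding nn_integral_layer_cake[OF assms(1,2)] nn_integral_layer_cake_rescaled[OF assms(1,3), symmetric]
proof (intro nn_integral_cong)
  fix t :: real
  have "{y. t < f y} = {}" if "M \<le> t" using le that by (auto simp: not_less intro: order.trans)
  then show "indicator {0<..} t * emeasure lborel {y. t < f y}
    = indicator {0<..<M} t * emeasure lborel {y. t < f y}"
    by (cases "t < M") (auto simp: indicator_def)
qed

lemma emeasure_superlevel_finite:
  fixes f :: "real \<Rightarrow> real"
  assumes [measurable]: "f \<in> borel_measurable borel" and "0 < c"
    and "(\<integral>\<^sup>+y. ennreal (f y) \<partial>lborel) < \<infinity>"
  shows "emeasure lborel {y. c < f y} < \<infinity>"
proof -
  have "ennreal c * emeasure lborel {y. c < f y} = (\<integral>\<^sup>+y. ennreal c * indicator {y. c < f y} y \<partial>lborel)"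
    by (simp add: nn_integral_cmult_indicator)
  also have "\<dots> \<le> (\<integral>\<^sup>+y. ennreal (f y) \<partial>lborel)"
    by (intro nn_integral_mono) (auto simp: indicator_def intro!: ennreal_leI)
  finally have "ennreal c * emeasure lborel {y. c < f y} < \<infinity>" using assms(3) by (rule le_less_trans)
  then show ?thesis using assms(2) by (auto simp: ennreal_mult_less_top)
qed

lemma superlevel_brunn_minkowski:
  fixes f g h :: "real \<Rightarrow> real"
  assumes s: "0 < s" "s < 1"
    and f: "log_concave f" "\<And>y. 0 \<le> f y" "(\<integral>\<^sup>+y. ennreal (f y) \<partial>lborel) < \<infinity>"
    and g: "log_concave g" "\<And>y. 0 \<le> g y" "(\<integral>\<^sup>+y. ennreal (g y) \<partial>lborel) < \<infinity>"
    and [measurable]: "h \<in> borel_measurable borel"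
    and hyp: "\<And>a b. f a powr s * g b powr (1 - s) \<le> h (s * a + (1 - s) * b)"
    and p: "0 < p" "{y. p < f y} \<noteq> {}" and q: "0 < q" "{y. q < g y} \<noteq> {}"
  shows "ennreal s * emeasure lborel {y. p < f y} + ennreal (1 - s) * emeasure lborel {y. q < g y}
    \<le> emeasure lborel {y. p powr s * q powr (1 - s) < h y}"
proof (rule brunn_minkowski_intervals)
  show "emeasure lborel {y. p < f y} < \<infinity>" "emeasure lborel {y. q < g y} < \<infinity>"
    using emeasure_superlevel_finite[OF log_concave_borel_measurable[OF f(1,2)] p(1) f(3)]
      emeasure_superlevel_finite[OF log_concave_borel_measurable[OF g(1,2)] q(1) g(3)] by simp_all
  fix a b assume "a \<in> {y. p < f y}" "b \<in> {y. q < g y}"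
  then have "p powr s * q powr (1 - s) < f a powr s * g b powr (1 - s)"
    using p q s by (intro powr_mult_strict_mono) auto
  then show "s * a + (1 - s) * b \<in> {y. p powr s * q powr (1 - s) < h y}"
    using hyp[of a b] by simp
qed (use s f g p q log_concave_superlevel_is_interval in auto)

lemma unit_layer_integral_brunn_minkowski:
  fixes f g h :: "real \<Rightarrow> real"
  assumes s: "0 < s" "s < 1"
    and f: "log_concave f" "\<And>y. 0 \<le> f y" "(\<integral>\<^sup>+y. ennreal (f y) \<partial>lborel) < \<infinity>"
    and g: "log_concave g" "\<And>y. 0 \<le> g y" "(\<integral>\<^sup>+y. ennreal (g y) \<partial>lborel) < \<infinity>"
    and h: "h \<in> borel_measurable borel"
    and hyp: "\<And>a b. f a powr s * g b powr (1 - s) \<le> h (s * a + (1 - s) * b)"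
    and Mf: "0 < Mf" "\<And>p. p < Mf \<Longrightarrow> {y. p < f y} \<noteq> {}"
    and Mg: "0 < Mg" "\<And>q. q < Mg \<Longrightarrow> {y. q < g y} \<noteq> {}"
  shows "ennreal s * unit_layer_integral f Mf + ennreal (1 - s) * unit_layer_integral g Mg
    \<le> unit_layer_integral h (Mf powr s * Mg powr (1 - s))"
proof -
  have "ennreal s * unit_layer_integral f Mf + ennreal (1 - s) * unit_layer_integral g Mg
    = (\<integral>\<^sup>+l. ennreal s * (indicator {0<..<1} l * emeasure lborel {y. Mf * l < f y})
        + ennreal (1 - s) * (indicator {0<..<1} l * emeasure lborel {y. Mg * l < g y}) \<partial>lborel)"
    unfolding unit_layer_integral_def
    using borel_measurable_emeasure_superlevel[OF log_concave_borel_measurable[OF f(1,2)]]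
      borel_measurable_emeasure_superlevel[OF log_concave_borel_measurable[OF g(1,2)]]
    by (simp add: nn_integral_add nn_integral_cmult)
  also have "\<dots> \<le> unit_layer_integral h (Mf powr s * Mg powr (1 - s))"
    unfolding unit_layer_integral_def
  proof (intro nn_integral_mono)
    fix l :: real
    show "ennreal s * (indicator {0<..<1} l * emeasure lborel {y. Mf * l < f y})
        + ennreal (1 - s) * (indicator {0<..<1} l * emeasure lborel {y. Mg * l < g y})
      \<le> indicator {0<..<1} l * emeasure lborel {y. Mf powr s * Mg powr (1 - s) * l < h y}"
    proof (cases "0 < l \<and> l < 1")
      case True
      then have "(Mf * l) powr s * (Mg * l) powr (1 - s) = Mf powr s * Mg powr (1 - s) * l"
        using Mf(1) Mg(1) by (simp add: powr_mult powr_add[symmetric] algebra_simps)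
      then show ?thesis
        using superlevel_brunn_minkowski[OF s f g h hyp, of "Mf * l" "Mg * l"] True Mf Mg by simp
    qed simp
  qed
  finally show ?thesis .
qed

lemma prekopa_leindler_1d:
  fixes f g h :: "real \<Rightarrow> real"
  assumes s: "0 < s" "s < 1"
    and f: "log_concave f" "\<And>y. 0 \<le> f y" "bdd_above (range f)" "(\<integral>\<^sup>+y. ennreal (f y) \<partial>lborel) < \<infinity>"
    and g: "log_concave g" "\<And>y. 0 \<le> g y" "bdd_above (range g)" "(\<integral>\<^sup>+y. ennreal (g y) \<partial>lborel) < \<infinity>"
    and h: "h \<in> borel_measurable borel" "\<And>y. 0 \<le> h y"
    and hyp: "\<And>a b. f a powr s * g b powr (1 - s) \<le> h (s * a + (1 - s) * b)"
  shows "ennreal (enn2real (\<integral>\<^sup>+y. ennreal (f y) \<partial>lborel) powr s * enn2real (\<integral>\<^sup>+y. ennreal (g y) \<partial>lborel) powr (1 - s))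
    \<le> (\<integral>\<^sup>+y. ennreal (h y) \<partial>lborel)"
proof -
  define Mf Mg where "Mf = Sup (range f)" and "Mg = Sup (range g)"
  have f_le: "f y \<le> Mf" and g_le: "g y \<le> Mg" for y
    using f(3) g(3) by (auto simp: Mf_def Mg_def intro: cSup_upper)
  show ?thesis
  proof (cases "Mf = 0 \<or> Mg = 0")
    case True
    then have "(\<forall>y. f y = 0) \<or> (\<forall>y. g y = 0)" using f_le g_le f(2) g(2) by (metis order.antisym)
    then show ?thesis using s by auto
  next
    case False
    then have "0 < Mf" "0 < Mg" using f_le[of 0] g_le[of 0] f(2)[of 0] g(2)[of 0] by linarith+
    define P Lf Lg where "P = Mf powr s * Mg powr (1 - s)"
      and "Lf = unit_layer_integral f Mf" and "Lg = unit_layer_integral g Mg"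
    have "0 < P" using \<open>0 < Mf\<close> \<open>0 < Mg\<close> by (simp add: P_def)
    have If: "(\<integral>\<^sup>+y. ennreal (f y) \<partial>lborel) = ennreal Mf * Lf"
      and Ig: "(\<integral>\<^sup>+y. ennreal (g y) \<partial>lborel) = ennreal Mg * Lg"
      unfolding Lf_def Lg_def using f_le g_le f(1,2) g(1,2) \<open>0 < Mf\<close> \<open>0 < Mg\<close>
      by (simp_all add: nn_integral_eq_unit_layer_integral log_concave_borel_measurable)
    have "Lf < \<infinity>" "Lg < \<infinity>"
      using f(4) g(4) \<open>0 < Mf\<close> \<open>0 < Mg\<close> by (auto simp: If Ig ennreal_mult_less_top)
    \<comment> \<open>normalising by the suprema reduces the claim to the arithmetic--geometric mean inequality\<close>
    have "enn2real (\<integral>\<^sup>+y. ennreal (f y) \<partial>lborel) powr s * enn2real (\<integral>\<^sup>+y. ennreal (g y) \<partial>lborel) powr (1 - s)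
      = P * (enn2real Lf powr s * enn2real Lg powr (1 - s))"
      using \<open>0 < Mf\<close> \<open>0 < Mg\<close> by (simp add: If Ig enn2real_mult P_def powr_mult mult_ac)
    also have "\<dots> \<le> P * (s * enn2real Lf + (1 - s) * enn2real Lg)"
      using s \<open>0 < P\<close> by (intro mult_left_mono powr_mult_le_weighted_mean) simp_all
    also have "\<dots> = enn2real (ennreal P * (ennreal s * Lf + ennreal (1 - s) * Lg))"
      using s \<open>0 < P\<close> \<open>Lf < \<infinity>\<close> \<open>Lg < \<infinity>\<close>
      by (simp add: enn2real_mult enn2real_plus ennreal_mult_less_top)
    finally have "ennreal (enn2real (\<integral>\<^sup>+y. ennreal (f y) \<partial>lborel) powr s * enn2real (\<integral>\<^sup>+y. ennreal (g y) \<partial>lborel) powr (1 - s))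
      \<le> ennreal (enn2real (ennreal P * (ennreal s * Lf + ennreal (1 - s) * Lg)))"
      by (rule ennreal_leI)
    also have "\<dots> = ennreal P * (ennreal s * Lf + ennreal (1 - s) * Lg)"
      using \<open>Lf < \<infinity>\<close> \<open>Lg < \<infinity>\<close> by (intro ennreal_enn2real) (auto simp: ennreal_mult_less_top)
    also have "\<dots> \<le> ennreal P * unit_layer_integral h P"
      unfolding Lf_def Lg_def P_def using f(3) g(3) \<open>0 < Mf\<close> \<open>0 < Mg\<close>
      by (intro mult_left_mono unit_layer_integral_brunn_minkowski[OF s f(1,2,4) g(1,2,4) h(1) hyp])
        (auto simp: Mf_def Mg_def less_cSup_iff)
    also have "\<dots> \<le> (\<integral>\<^sup>+y. ennreal (h y) \<partial>lborel)"
      using h \<open>0 < P\<close> by (rule nn_integral_ge_unit_layer_integral)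
    finally show ?thesis .
  qed
qed

section \<open>Gaussian integrals\<close>

lemma nn_integral_gaussian_finite:
  fixes a :: real
  assumes a: "0 < a"
  shows "(\<integral>\<^sup>+x. ennreal (exp (- a * (norm x)\<^sup>2)) \<partial>(lborel :: 'e::euclidean_space measure)) < \<infinity>"
proof -
  define \<sigma> where "\<sigma> = sqrt (1 / (2 * a))"
  have "0 < \<sigma>" "\<sigma>\<^sup>2 = 1 / (2 * a)" using a by (simp_all add: \<sigma>_def)
  then have "exp (- a * t\<^sup>2) = sqrt (2 * pi * \<sigma>\<^sup>2) * normal_density 0 \<sigma> t" for t :: real
    using a by (simp add: normal_density_def field_simps)
  then have "integrable lborel (\<lambda>t::real. exp (- a * t\<^sup>2))"
    using integrable_normal_density[OF \<open>0 < \<sigma>\<close>, of 0] by simp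
  then have gauss_1d: "(\<integral>\<^sup>+t. ennreal (exp (- a * t\<^sup>2)) \<partial>lborel) < \<infinity>"
    by (simp add: integrable_iff_bounded)
  have "(norm x)\<^sup>2 = (\<Sum>b\<in>Basis. (x \<bullet> b)\<^sup>2)" for x :: 'e
    unfolding power2_norm_eq_inner by (subst euclidean_inner) (simp add: power2_eq_square)
  then have "(\<integral>\<^sup>+x. ennreal (exp (- a * (norm x)\<^sup>2)) \<partial>(lborel :: 'e measure))
    = (\<integral>\<^sup>+x. (\<Prod>b\<in>Basis. ennreal (exp (- a * (x \<bullet> b)\<^sup>2))) \<partial>(lborel :: 'e measure))"
    by (simp add: prod_ennreal exp_sum[symmetric] sum_distrib_left sum_negf[symmetric])
  also have "\<dots> = (\<Prod>b\<in>(Basis :: 'e set). \<integral>\<^sup>+t. ennreal (exp (- a * t\<^sup>2)) \<partial>lborel)"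
    by (rule nn_integral_lborel_prod) auto
  also have "\<dots> < \<infinity>"
    using gauss_1d by (simp add: power_less_top_ennreal)
  finally show ?thesis .
qed

lemma nn_integral_exp_neg_finite:
  fixes F :: "'e::euclidean_space \<Rightarrow> real"
  assumes "0 < a" and F: "\<And>w. a * (norm w)\<^sup>2 - K \<le> F w"
  shows "(\<integral>\<^sup>+w. ennreal (exp (- F w)) \<partial>lborel) < \<infinity>"
proof -
  have "(\<integral>\<^sup>+w. ennreal (exp (- F w)) \<partial>lborel) \<le> (\<integral>\<^sup>+w. ennreal (exp K) * ennreal (exp (- a * (norm w)\<^sup>2)) \<partial>(lborel :: 'e measure))"
  proof (rule nn_integral_mono)
    fix w show "ennreal (exp (- F w)) \<le> ennreal (exp K) * ennreal (exp (- a * (norm w)\<^sup>2))"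
      using F[of w] by (simp add: ennreal_mult[symmetric] exp_add[symmetric])
  qed
  also have "\<dots> = ennreal (exp K) * (\<integral>\<^sup>+w. ennreal (exp (- a * (norm w)\<^sup>2)) \<partial>(lborel :: 'e measure))"
    by (rule nn_integral_cmult) simp
  also have "\<dots> < \<infinity>"
    using nn_integral_gaussian_finite[OF assms(1), where 'e='e] by (simp add: ennreal_mult_less_top)
  finally show ?thesis .
qed

lemma enn2real_nn_integral_exp_neg_pos:
  fixes F :: "'e::euclidean_space \<Rightarrow> real"
  assumes [measurable]: "F \<in> borel_measurable borel" and "0 < a" "\<And>w. a * (norm w)\<^sup>2 - K \<le> F w"
  shows "0 < enn2real (\<integral>\<^sup>+w. ennreal (exp (- F w)) \<partial>lborel)"
proof -
  have "(\<integral>\<^sup>+w. ennreal (exp (- F w)) \<partial>lborel) \<noteq> 0"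
  proof
    assume "(\<integral>\<^sup>+w. ennreal (exp (- F w)) \<partial>lborel) = 0"
    then have "AE w in lborel. ennreal (exp (- F w)) = 0" by (simp add: nn_integral_0_iff_AE)
    then have "AE w in (lborel :: 'e measure). False" by simp
    then have "emeasure (lborel :: 'e measure) (space lborel) = 0"
      by (simp add: eventually_False ae_filter_eq_bot_iff)
    then show False by simp
  qed
  then show ?thesis
    using nn_integral_exp_neg_finite[OF assms(2,3)] by (simp add: enn2real_positive_iff less_top zero_less_iff_neq_zero)
qed

section \<open>Prekopa's theorem\<close>

definition jointly_log_concave :: "(('i \<Rightarrow> real) \<Rightarrow> 'v::real_vector \<Rightarrow> real) \<Rightarrow> bool" where
  "jointly_log_concave H \<longleftrightarrow> (\<forall>f0 f1 v0 v1 s. 0 < s \<and> s < 1 \<longrightarrow>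
     H f0 v0 powr s * H f1 v1 powr (1 - s)
       \<le> H (\<lambda>k. s * f0 k + (1 - s) * f1 k) (s *\<^sub>R v0 + (1 - s) *\<^sub>R v1))"

lemma jointly_log_concaveD:
  "jointly_log_concave H \<Longrightarrow> 0 < s \<Longrightarrow> s < 1 \<Longrightarrow>
    H f0 v0 powr s * H f1 v1 powr (1 - s) \<le> H (\<lambda>k. s * f0 k + (1 - s) * f1 k) (s *\<^sub>R v0 + (1 - s) *\<^sub>R v1)"
  by (simp add: jointly_log_concave_def)

lemma convex_combination_fun_upd:
  fixes s a b :: real
  shows "(\<lambda>k. s * (x0(i := a)) k + (1 - s) * (x1(i := b)) k)
    = (\<lambda>k. s * x0 k + (1 - s) * x1 k)(i := s * a + (1 - s) * b)"
  by (simp add: fun_eq_iff)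

lemma log_concave_fibre:
  assumes "jointly_log_concave H"
  shows "log_concave (\<lambda>y. H (x(i := y)) v)"
  unfolding log_concave_def
proof (intro allI impI)
  fix a b s :: real assume s: "0 < s \<and> s < 1"
  have "(\<lambda>k. s * x k + (1 - s) * x k) = x" "s *\<^sub>R v + (1 - s) *\<^sub>R v = v"
    by (simp add: fun_eq_iff algebra_simps) (simp flip: scaleR_add_left)
  then show "H (x(i := a)) v powr s * H (x(i := b)) v powr (1 - s) \<le> H (x(i := s *\<^sub>R a + (1 - s) *\<^sub>R b)) v"
    using jointly_log_concaveD[OF assms, of s "x(i := a)" v "x(i := b)" v, unfolded convex_combination_fun_upd] s
    by simp
qed

lemma jointly_log_concave_fibre_integral:
  fixes H :: "('i \<Rightarrow> real) \<Rightarrow> 'v::real_vector \<Rightarrow> real"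
  assumes H: "jointly_log_concave H" and H0: "\<And>f v. 0 \<le> H f v"
    and bdd: "\<And>x v. bdd_above (range (\<lambda>y. H (x(i := y)) v))"
    and fin: "\<And>x v. (\<integral>\<^sup>+y. ennreal (H (x(i := y)) v) \<partial>lborel) < \<infinity>"
  shows "jointly_log_concave (\<lambda>x v. enn2real (\<integral>\<^sup>+y. ennreal (H (x(i := y)) v) \<partial>lborel))"
  unfolding jointly_log_concave_def
proof (intro allI impI)
  fix x0 x1 :: "'i \<Rightarrow> real" and v0 v1 :: 'v and s :: real
  assume s: "0 < s \<and> s < 1"
  define xs vs where "xs = (\<lambda>k. s * x0 k + (1 - s) * x1 k)" and "vs = s *\<^sub>R v0 + (1 - s) *\<^sub>R v1"
  have "ennreal (enn2real (\<integral>\<^sup>+y. ennreal (H (x0(i := y)) v0) \<partial>lborel) powr s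
      * enn2real (\<integral>\<^sup>+y. ennreal (H (x1(i := y)) v1) \<partial>lborel) powr (1 - s))
    \<le> (\<integral>\<^sup>+y. ennreal (H (xs(i := y)) vs) \<partial>lborel)"
  proof (rule prekopa_leindler_1d)
    show "H (x0(i := a)) v0 powr s * H (x1(i := b)) v1 powr (1 - s) \<le> H (xs(i := s * a + (1 - s) * b)) vs"
      for a b
      using jointly_log_concaveD[OF H, of s "x0(i := a)" v0 "x1(i := b)" v1, unfolded convex_combination_fun_upd] s
      by (simp add: xs_def vs_def)
    show "(\<lambda>y. H (xs(i := y)) vs) \<in> borel_measurable borel"
      by (intro log_concave_borel_measurable log_concave_fibre H H0)
  qed (use s in \<open>simp_all add: H0 bdd fin[simplified] log_concave_fibre[OF H]\<close>)
  then have "enn2real (ennreal (enn2real (\<integral>\<^sup>+y. ennreal (H (x0(i := y)) v0) \<partial>lborel) powr s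
      * enn2real (\<integral>\<^sup>+y. ennreal (H (x1(i := y)) v1) \<partial>lborel) powr (1 - s)))
    \<le> enn2real (\<integral>\<^sup>+y. ennreal (H (xs(i := y)) vs) \<partial>lborel)"
    by (rule enn2real_mono[OF _ fin[of xs vs, unfolded infinity_ennreal_def]])
  then show "enn2real (\<integral>\<^sup>+y. ennreal (H (x0(i := y)) v0) \<partial>lborel) powr s
      * enn2real (\<integral>\<^sup>+y. ennreal (H (x1(i := y)) v1) \<partial>lborel) powr (1 - s)
    \<le> enn2real (\<integral>\<^sup>+y. ennreal (H ((\<lambda>k. s * x0 k + (1 - s) * x1 k)(i := y)) (s *\<^sub>R v0 + (1 - s) *\<^sub>R v1)) \<partial>lborel)"
    by (simp add: xs_def vs_def)
qed

lemma exp_neg_sum_squares_fun_upd: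
  fixes a y :: real and x :: "'i \<Rightarrow> real"
  assumes "finite I" "i \<notin> I"
  shows "exp (- a * (\<Sum>k\<in>insert i I. ((x(i := y)) k)\<^sup>2)) = exp (- a * (\<Sum>k\<in>I. (x k)\<^sup>2)) * exp (- a * y\<^sup>2)"
proof -
  have "(\<Sum>k\<in>I. ((x(i := y)) k)\<^sup>2) = (\<Sum>k\<in>I. (x k)\<^sup>2)"
    using assms by (intro sum.cong) auto
  then have "(\<Sum>k\<in>insert i I. ((x(i := y)) k)\<^sup>2) = y\<^sup>2 + (\<Sum>k\<in>I. (x k)\<^sup>2)"
    using assms by simp
  then have "- a * (\<Sum>k\<in>insert i I. ((x(i := y)) k)\<^sup>2) = - a * (\<Sum>k\<in>I. (x k)\<^sup>2) + - a * y\<^sup>2"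
    by (simp add: algebra_simps)
  then show ?thesis by (simp only: exp_add)
qed

lemma fibre_gaussian_bound:
  fixes H :: "('i \<Rightarrow> real) \<Rightarrow> 'v \<Rightarrow> real"
  assumes I: "finite I" "i \<notin> I" and "0 < a" and H0: "\<And>f. 0 \<le> H f v"
    and B: "\<And>f. H f v \<le> B * exp (- a * (\<Sum>k\<in>insert i I. (f k)\<^sup>2))"
  shows "0 \<le> B" and "bdd_above (range (\<lambda>y. H (x(i := y)) v))"
    and "(\<integral>\<^sup>+y. ennreal (H (x(i := y)) v) \<partial>lborel)
      \<le> ennreal (B * exp (- a * (\<Sum>k\<in>I. (x k)\<^sup>2))) * (\<integral>\<^sup>+y. ennreal (exp (- a * y\<^sup>2)) \<partial>lborel)"
proof -
  show "0 \<le> B" using order.trans[OF H0 B[of "\<lambda>_. 0"]] by (simp add: zero_le_mult_iff)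
  then have C0: "0 \<le> B * exp (- a * (\<Sum>k\<in>I. (x k)\<^sup>2))" by simp
  have le: "H (x(i := y)) v \<le> B * exp (- a * (\<Sum>k\<in>I. (x k)\<^sup>2)) * exp (- a * y\<^sup>2)" for y
    using B[of "x(i := y)"] unfolding exp_neg_sum_squares_fun_upd[OF I] by (simp add: mult.assoc)
  have "H (x(i := y)) v \<le> B * exp (- a * (\<Sum>k\<in>I. (x k)\<^sup>2))" for y
    using \<open>0 < a\<close> order.trans[OF le mult_right_le_one_le[OF C0]] by simp
  then show "bdd_above (range (\<lambda>y. H (x(i := y)) v))" by (rule bdd_aboveI2)
  have "(\<integral>\<^sup>+y. ennreal (H (x(i := y)) v) \<partial>lborel)
      \<le> (\<integral>\<^sup>+y. ennreal (B * exp (- a * (\<Sum>k\<in>I. (x k)\<^sup>2))) * ennreal (exp (- a * y\<^sup>2)) \<partial>lborel)"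
    using le C0 by (intro nn_integral_mono) (simp add: ennreal_mult[symmetric] ennreal_leI)
  then show "(\<integral>\<^sup>+y. ennreal (H (x(i := y)) v) \<partial>lborel)
      \<le> ennreal (B * exp (- a * (\<Sum>k\<in>I. (x k)\<^sup>2))) * (\<integral>\<^sup>+y. ennreal (exp (- a * y\<^sup>2)) \<partial>lborel)"
    by (simp add: nn_integral_cmult)
qed

lemma borel_measurable_fibre_integral:
  assumes "i \<notin> I" "(\<lambda>f. H f) \<in> borel_measurable (PiM (insert i I) (\<lambda>_. lborel))"
  shows "(\<lambda>x. \<integral>\<^sup>+y. ennreal (H (x(i := y))) \<partial>lborel) \<in> borel_measurable (PiM I (\<lambda>_. lborel))"
proof -
  have "(\<lambda>p. ennreal (H ((fst p)(i := snd p)))) \<in> borel_measurable (PiM I (\<lambda>_. lborel) \<Otimes>\<^sub>M lborel)"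
    using measurable_comp[OF measurable_add_dim[of i I "\<lambda>_. lborel"] assms(2)]
    by (simp add: comp_def case_prod_unfold)
  from lborel.borel_measurable_nn_integral_fst[OF this] show ?thesis by simp
qed

lemma prekopa_product:
  fixes H :: "('i \<Rightarrow> real) \<Rightarrow> 'v::real_vector \<Rightarrow> real"
  assumes "finite I" and a: "0 < a"
    and "\<And>v. (\<lambda>f. H f v) \<in> borel_measurable (PiM I (\<lambda>_. lborel))"
    and "\<And>f v. 0 \<le> H f v" and "jointly_log_concave H"
    and "\<And>v. \<exists>B. \<forall>f. H f v \<le> B * exp (- a * (\<Sum>k\<in>I. (f k)\<^sup>2))"
  shows "log_concave (\<lambda>v. enn2real (\<integral>\<^sup>+f. ennreal (H f v) \<partial>PiM I (\<lambda>_. lborel)))"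
  using assms(1,3-6)
proof (induction I arbitrary: H rule: finite_induct)
  case (empty H)
  have "s * c + (1 - s) * c = c" for s c :: real by (simp add: algebra_simps)
  then show ?case
    using jointly_log_concaveD[OF empty.prems(3), of _ "\<lambda>_. undefined" _ "\<lambda>_. undefined"]
    by (simp add: log_concave_def PiM_empty nn_integral_count_space_finite empty.prems(2))
next
  case (insert i I H)
  note Hm = insert.prems(1) and H0 = insert.prems(2) and H = insert.prems(3)
  interpret product_sigma_finite "\<lambda>_::'i. lborel :: real measure"
    by (simp add: product_sigma_finite_def lborel.sigma_finite_measure_axioms)
  define G where "G = (\<integral>\<^sup>+y. ennreal (exp (- a * y\<^sup>2)) \<partial>lborel)"
  have "G < \<infinity>" using nn_integral_gaussian_finite[OF a, where 'e=real] by (simp add: G_def)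
  obtain B where B: "\<And>f v. H f v \<le> B v * exp (- a * (\<Sum>k\<in>insert i I. (f k)\<^sup>2))"
    using insert.prems(4) by metis
  have B0: "0 \<le> B v" for v
    by (rule fibre_gaussian_bound(1)[where H=H, OF insert.hyps a H0 B])
  have bdd: "bdd_above (range (\<lambda>y. H (x(i := y)) v))" for x v
    by (rule fibre_gaussian_bound(2)[where H=H and B="B v", OF insert.hyps a H0 B])
  have le: "(\<integral>\<^sup>+y. ennreal (H (x(i := y)) v) \<partial>lborel) \<le> ennreal (B v * exp (- a * (\<Sum>k\<in>I. (x k)\<^sup>2))) * G"
    for x v
    unfolding G_def by (rule fibre_gaussian_bound(3)[where H=H and B="B v", OF insert.hyps a H0 B])
  have fin: "(\<integral>\<^sup>+y. ennreal (H (x(i := y)) v) \<partial>lborel) < \<infinity>" for x v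
  proof -
    have "ennreal (B v * exp (- a * (\<Sum>k\<in>I. (x k)\<^sup>2))) * G < \<infinity>"
      using \<open>G < \<infinity>\<close> by (simp add: ennreal_mult_less_top)
    with le show ?thesis by (rule le_less_trans)
  qed
  define K where "K x v = enn2real (\<integral>\<^sup>+y. ennreal (H (x(i := y)) v) \<partial>lborel)" for x v
  have "log_concave (\<lambda>v. enn2real (\<integral>\<^sup>+x. ennreal (K x v) \<partial>PiM I (\<lambda>_. lborel)))"
  proof (rule insert.IH)
    show "(\<lambda>x. K x v) \<in> borel_measurable (PiM I (\<lambda>_. lborel))" for v
      unfolding K_def by (rule borel_measurable_enn2real[OF borel_measurable_fibre_integral[OF insert.hyps(2) Hm]])
    show "jointly_log_concave K"
      unfolding K_def using H H0 bdd fin by (rule jointly_log_concave_fibre_integral)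
    have "K x v \<le> B v * enn2real G * exp (- a * (\<Sum>k\<in>I. (x k)\<^sup>2))" for x v
    proof -
      have "K x v \<le> enn2real (ennreal (B v * exp (- a * (\<Sum>k\<in>I. (x k)\<^sup>2))) * G)"
        unfolding K_def using le \<open>G < \<infinity>\<close> by (intro enn2real_mono) (auto simp: ennreal_mult_less_top)
      also have "\<dots> = B v * enn2real G * exp (- a * (\<Sum>k\<in>I. (x k)\<^sup>2))"
        using B0 by (simp add: enn2real_mult)
      finally show ?thesis .
    qed
    then show "\<exists>C. \<forall>x. K x v \<le> C * exp (- a * (\<Sum>k\<in>I. (x k)\<^sup>2))" for v by blast
  qed (simp add: K_def)
  moreover have "(\<integral>\<^sup>+f. ennreal (H f v) \<partial>PiM (insert i I) (\<lambda>_. lborel))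
      = (\<integral>\<^sup>+x. ennreal (K x v) \<partial>PiM I (\<lambda>_. lborel))" for v
  proof -
    have "(\<integral>\<^sup>+f. ennreal (H f v) \<partial>PiM (insert i I) (\<lambda>_. lborel))
      = (\<integral>\<^sup>+x. (\<integral>\<^sup>+y. ennreal (H (x(i := y)) v) \<partial>lborel) \<partial>PiM I (\<lambda>_. lborel))"
      using Hm[of v] by (intro product_nn_integral_insert[OF insert.hyps]) simp
    then show ?thesis using fin by (simp add: K_def less_top)
  qed
  ultimately show ?case by (simp only:)
qed

lemma exp_neg_powr_mult:
  fixes A B s :: real
  shows "exp (- A) powr s * exp (- B) powr (1 - s) = exp (- (s * A + (1 - s) * B))"
  by (simp add: powr_def mult_exp_exp algebra_simps)

lemma convex_on_neg_ln_if_log_concave: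
  assumes "log_concave F" and pos: "\<And>v. 0 < F v"
  shows "convex_on UNIV (\<lambda>v. - ln (F v))"
proof (rule convex_onI)
  fix t :: real and x y :: 'a assume t: "0 < t" "t < 1"
  have "F x powr (1 - t) * F y powr t \<le> F ((1 - t) *\<^sub>R x + t *\<^sub>R y)"
    using log_concaveD[OF assms(1), of "1 - t" x y] t by simp
  then have "ln (F x powr (1 - t) * F y powr t) \<le> ln (F ((1 - t) *\<^sub>R x + t *\<^sub>R y))"
    using pos[of x] pos[of y] pos[of "(1 - t) *\<^sub>R x + t *\<^sub>R y"]
    by (subst ln_le_cancel_iff) (auto intro: mult_pos_pos)
  then show "- ln (F ((1 - t) *\<^sub>R x + t *\<^sub>R y)) \<le> (1 - t) * - ln (F x) + t * - ln (F y)"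
    using pos[of x] pos[of y] by (simp add: ln_mult ln_powr)
qed simp

lemma convex_on_slice:
  assumes "convex_on UNIV \<Psi>"
  shows "convex_on UNIV (\<lambda>w. \<Psi> (w, v))"
proof (rule convex_onI)
  fix t :: real and x y assume "0 < t" "t < 1"
  then show "\<Psi> ((1 - t) *\<^sub>R x + t *\<^sub>R y, v) \<le> (1 - t) * \<Psi> (x, v) + t * \<Psi> (y, v)"
    using convex_onD[OF assms, of t "(x, v)" "(y, v)"] by (simp flip: scaleR_add_left)
qed simp

lemma norm_sum_Basis_squared:
  "(norm (\<Sum>b\<in>Basis. f b *\<^sub>R (b::'e::euclidean_space)))\<^sup>2 = (\<Sum>b\<in>Basis. (f b)\<^sup>2)"
proof -
  have "(\<Sum>c\<in>Basis. f c *\<^sub>R c) \<bullet> b = f b" if "b \<in> Basis" for b :: 'e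
    using that by (simp add: inner_sum_left inner_Basis if_distrib cong: if_cong)
  then show ?thesis
    unfolding power2_norm_eq_inner by (subst euclidean_inner) (simp add: power2_eq_square)
qed

theorem prekopa:
  fixes \<Psi> :: "'e::euclidean_space \<times> 'v::real_vector \<Rightarrow> real"
  assumes \<Psi>: "convex_on UNIV \<Psi>" and a: "0 < a"
    and coercive: "\<And>v. \<exists>K. \<forall>w. a * (norm w)\<^sup>2 - K \<le> \<Psi> (w, v)"
  shows "convex_on UNIV (\<lambda>v. - ln (enn2real (\<integral>\<^sup>+w. ennreal (exp (- \<Psi> (w, v))) \<partial>lborel)))"
proof (rule convex_on_neg_ln_if_log_concave)
  let ?\<phi> = "\<lambda>f. \<Sum>b\<in>Basis. f b *\<^sub>R (b::'e)"
  define H where "H f v = exp (- \<Psi> (?\<phi> f, v))" for f v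
  have \<Psi>m: "(\<lambda>w. \<Psi> (w, v)) \<in> borel_measurable borel" for v
    using convex_on_continuous[OF open_UNIV convex_on_slice[OF \<Psi>]] by (rule borel_measurable_continuous_onI)
  have \<phi>m: "?\<phi> \<in> borel_measurable (PiM Basis (\<lambda>_. lborel))"
    by (intro borel_measurable_sum borel_measurable_scaleR) (auto intro: measurable_component_singleton)
  show "0 < enn2real (\<integral>\<^sup>+w. ennreal (exp (- \<Psi> (w, v))) \<partial>lborel)" for v
    using coercive[of v] enn2real_nn_integral_exp_neg_pos[OF \<Psi>m a] by blast
  have "(\<integral>\<^sup>+w. ennreal (exp (- \<Psi> (w, v))) \<partial>lborel) = (\<integral>\<^sup>+f. ennreal (H f v) \<partial>PiM Basis (\<lambda>_. lborel))" for v
    unfolding H_def using \<Psi>m[of v]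
    by (subst lborel_eq) (simp add: nn_integral_distr[OF \<phi>m])
  moreover have "log_concave (\<lambda>v. enn2real (\<integral>\<^sup>+f. ennreal (H f v) \<partial>PiM Basis (\<lambda>_. lborel)))"
  proof (rule prekopa_product[OF _ a])
    show "(\<lambda>f. H f v) \<in> borel_measurable (PiM Basis (\<lambda>_. lborel))" for v
      unfolding H_def using measurable_comp[OF \<phi>m \<Psi>m[of v]] by (simp add: comp_def)
    show "jointly_log_concave H"
      unfolding jointly_log_concave_def H_def exp_neg_powr_mult
    proof (intro allI impI)
      fix f0 f1 :: "'e \<Rightarrow> real" and v0 v1 and s :: real assume "0 < s \<and> s < 1"
      moreover have "?\<phi> (\<lambda>k. s * f0 k + (1 - s) * f1 k) = s *\<^sub>R ?\<phi> f0 + (1 - s) *\<^sub>R ?\<phi> f1"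
        by (simp add: scaleR_sum_right scaleR_add_left sum.distrib)
      ultimately show "exp (- (s * \<Psi> (?\<phi> f0, v0) + (1 - s) * \<Psi> (?\<phi> f1, v1)))
          \<le> exp (- \<Psi> (?\<phi> (\<lambda>k. s * f0 k + (1 - s) * f1 k), s *\<^sub>R v0 + (1 - s) *\<^sub>R v1))"
        using convex_onD[OF \<Psi>, of "1 - s" "(?\<phi> f0, v0)" "(?\<phi> f1, v1)"] by simp
    qed
    show "\<exists>B. \<forall>f. H f v \<le> B * exp (- a * (\<Sum>k\<in>Basis. (f k)\<^sup>2))" for v
    proof -
      obtain K where K: "\<And>w. a * (norm w)\<^sup>2 - K \<le> \<Psi> (w, v)" using coercive by blast
      have "H f v \<le> exp K * exp (- a * (\<Sum>k\<in>Basis. (f k)\<^sup>2))" for f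
        using K[of "?\<phi> f"] by (simp add: H_def norm_sum_Basis_squared mult_exp_exp)
      then show ?thesis by blast
    qed
  qed (auto simp: H_def)
  ultimately show "log_concave (\<lambda>v. enn2real (\<integral>\<^sup>+w. ennreal (exp (- \<Psi> (w, v))) \<partial>lborel))"
    by simp
qed

section \<open>Convexity with a modulus\<close>

definition convex_with_modulus :: "('a::real_vector \<Rightarrow> real) \<Rightarrow> ('a \<Rightarrow> real) \<Rightarrow> bool" where
  "convex_with_modulus D F \<longleftrightarrow> (\<forall>u v s. 0 \<le> s \<and> s \<le> 1 \<longrightarrow>
     F (s *\<^sub>R u + (1 - s) *\<^sub>R v) \<le> s * F u + (1 - s) * F v - s * (1 - s) * D (u - v))"

lemma convex_with_modulusD:
  "convex_with_modulus D F \<Longrightarrow> 0 \<le> s \<Longrightarrow> s \<le> 1 \<Longrightarrow>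
    F (s *\<^sub>R u + (1 - s) *\<^sub>R v) \<le> s * F u + (1 - s) * F v - s * (1 - s) * D (u - v)"
  by (simp add: convex_with_modulus_def)

lemma strongly_convex_iff_convex_with_modulus:
  "strongly_convex c F \<longleftrightarrow> convex_with_modulus (\<lambda>d. c / 2 * (norm d)\<^sup>2) F"
  by (simp add: strongly_convex_def convex_with_modulus_def mult_ac)

lemma convex_with_modulus_zero_iff: "convex_with_modulus (\<lambda>_. 0) F \<longleftrightarrow> convex_on UNIV F"
proof
  assume F: "convex_with_modulus (\<lambda>_. 0) F"
  show "convex_on UNIV F"
  proof (rule convex_onI)
    fix t :: real and x y :: 'a assume "0 < t" "t < 1"
    then show "F ((1 - t) *\<^sub>R x + t *\<^sub>R y) \<le> (1 - t) * F x + t * F y"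
      using convex_with_modulusD[OF F, of "1 - t" x y] by simp
  qed simp
next
  assume "convex_on UNIV F"
  then show "convex_with_modulus (\<lambda>_. 0) F"
    unfolding convex_with_modulus_def using convex_onD[of UNIV F "1 - _"] by force
qed

lemma convex_with_modulus_mono:
  assumes "convex_with_modulus D F" "\<And>d. E d \<le> D d"
  shows "convex_with_modulus E F"
  unfolding convex_with_modulus_def
proof (intro allI impI)
  fix u v and s :: real assume s: "0 \<le> s \<and> s \<le> 1"
  then have "s * (1 - s) * E (u - v) \<le> s * (1 - s) * D (u - v)"
    using assms(2) by (intro mult_left_mono) auto
  then show "F (s *\<^sub>R u + (1 - s) *\<^sub>R v) \<le> s * F u + (1 - s) * F v - s * (1 - s) * E (u - v)"
    using convex_with_modulusD[OF assms(1), of s u v] s by linarith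
qed

lemma convex_with_modulus_add:
  assumes "convex_with_modulus D F" "convex_with_modulus E G"
  shows "convex_with_modulus (\<lambda>d. D d + E d) (\<lambda>u. F u + G u)"
  unfolding convex_with_modulus_def
proof (intro allI impI)
  fix u v and s :: real assume s: "0 \<le> s \<and> s \<le> 1"
  have "F (s *\<^sub>R u + (1 - s) *\<^sub>R v) + G (s *\<^sub>R u + (1 - s) *\<^sub>R v)
      \<le> (s * F u + (1 - s) * F v - s * (1 - s) * D (u - v)) + (s * G u + (1 - s) * G v - s * (1 - s) * E (u - v))"
    using convex_with_modulusD[OF assms(1), of s u v] convex_with_modulusD[OF assms(2), of s u v] s
    by linarith
  then show "F (s *\<^sub>R u + (1 - s) *\<^sub>R v) + G (s *\<^sub>R u + (1 - s) *\<^sub>R v)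
      \<le> s * (F u + G u) + (1 - s) * (F v + G v) - s * (1 - s) * (D (u - v) + E (u - v))"
    by (simp add: algebra_simps)
qed

lemma convex_with_modulus_sum:
  assumes "finite I" "\<And>i. i \<in> I \<Longrightarrow> convex_with_modulus (D i) (F i)"
  shows "convex_with_modulus (\<lambda>d. \<Sum>i\<in>I. D i d) (\<lambda>u. \<Sum>i\<in>I. F i u)"
  using assms
proof (induction I rule: finite_induct)
  case empty
  then show ?case by (simp add: convex_with_modulus_def)
next
  case (insert i I)
  then show ?case by (simp add: convex_with_modulus_add)
qed

lemma convex_with_modulus_compose_linear:
  assumes "linear L" "convex_with_modulus D F"
  shows "convex_with_modulus (\<lambda>d. D (L d)) (\<lambda>u. F (L u))"
  using assms(2) unfolding convex_with_modulus_def
  by (simp add: linear_add[OF assms(1)] linear_scale[OF assms(1)] linear_diff[OF assms(1)])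

lemma norm_convex_combination_squared:
  fixes u v :: "'a::real_inner"
  shows "(norm (s *\<^sub>R u + (1 - s) *\<^sub>R v))\<^sup>2
    = s * (norm u)\<^sup>2 + (1 - s) * (norm v)\<^sup>2 - s * (1 - s) * (norm (u - v))\<^sup>2"
  unfolding power2_norm_eq_inner
  by (simp add: inner_add_left inner_add_right inner_diff_left inner_diff_right inner_commute
      algebra_simps power2_eq_square)

lemma convex_with_modulus_norm_squared:
  fixes c :: real
  shows "convex_with_modulus (\<lambda>d::'a::real_inner. c * (norm d)\<^sup>2) (\<lambda>u. c * (norm u)\<^sup>2)"
  unfolding convex_with_modulus_def norm_convex_combination_squared by (simp add: algebra_simps)

lemma convex_with_modulus_norm_squared_linear:
  fixes c :: real and L :: "'a::real_vector \<Rightarrow> 'b::real_inner"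
  assumes "linear L"
  shows "convex_with_modulus (\<lambda>d. c * (norm (L d))\<^sup>2) (\<lambda>u. c * (norm (L u))\<^sup>2)"
  using convex_with_modulus_compose_linear[OF assms convex_with_modulus_norm_squared] .

lemma strongly_convex_compose_linear:
  assumes "strongly_convex c F" "linear L"
  shows "convex_with_modulus (\<lambda>d. c / 2 * (norm (L d))\<^sup>2) (\<lambda>u. F (L u))"
  using assms convex_with_modulus_compose_linear by (auto simp: strongly_convex_iff_convex_with_modulus)

lemma convex_on_compose_linear:
  assumes "linear L" "convex_on UNIV F"
  shows "convex_on UNIV (\<lambda>u. F (L u))"
  using convex_with_modulus_compose_linear[OF assms(1), of "\<lambda>_. 0"] assms(2)
  by (simp flip: convex_with_modulus_zero_iff)

lemma convex_on_minus_norm_squared_if_strongly_convex: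
  assumes "strongly_convex c F"
  shows "convex_on UNIV (\<lambda>u. F u - c / 2 * (norm u)\<^sup>2)"
proof -
  have "convex_with_modulus (\<lambda>d. c / 2 * (norm d)\<^sup>2 + - (c / 2) * (norm d)\<^sup>2) (\<lambda>u. F u + - (c / 2) * (norm u)\<^sup>2)"
    using assms unfolding strongly_convex_iff_convex_with_modulus
    by (intro convex_with_modulus_add convex_with_modulus_norm_squared)
  then show ?thesis by (simp flip: convex_with_modulus_zero_iff)
qed

lemma strongly_convex_quadratic_lower_bound:
  fixes F :: "'a::euclidean_space \<Rightarrow> real"
  assumes F: "strongly_convex c F" and c: "0 < c"
  shows "\<exists>K. \<forall>u. c / 4 * (norm u)\<^sup>2 - K \<le> F u"
proof -
  define \<psi> where "\<psi> u = F u - c / 2 * (norm u)\<^sup>2" for u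
  have cv: "convex_on UNIV \<psi>"
    unfolding \<psi>_def by (rule convex_on_minus_norm_squared_if_strongly_convex[OF F])
  have "compact (\<psi> ` cball 0 1)"
    using convex_on_continuous[OF open_UNIV cv] by (intro compact_continuous_image) (auto intro: continuous_on_subset)
  then obtain m where "\<forall>v\<in>cball 0 1. \<bar>\<psi> v\<bar> \<le> m"
    by (auto dest!: compact_imp_bounded simp: bounded_iff)
  then have m: "\<And>v. norm v \<le> 1 \<Longrightarrow> \<bar>\<psi> v\<bar> \<le> m" by simp
  have "0 \<le> m" using m[of 0] by simp
  \<comment> \<open>convexity along the ray from 0 gives a linear lower bound on \<open>\<psi>\<close> outside the unit ball\<close>
  have lin: "- m - 2 * m * norm u \<le> \<psi> u" for u
  proof (cases "norm u \<le> 1")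
    case True
    have "0 \<le> 2 * m * norm u" using \<open>0 \<le> m\<close> by simp
    then show ?thesis using m[OF True] unfolding abs_le_iff by linarith
  next
    case False
    define t where "t = 1 / norm u"
    have t: "0 < t" "t \<le> 1" "norm (t *\<^sub>R u) \<le> 1" using False by (auto simp: t_def divide_le_eq_1)
    have "\<psi> (t *\<^sub>R u) \<le> (1 - t) * \<psi> 0 + t * \<psi> u"
      using convex_onD[OF cv, of t 0 u] t by simp
    moreover have "(1 - t) * \<psi> 0 \<le> (1 - t) * m"
      using m[of 0] t by (intro mult_left_mono) auto
    moreover have "(1 - t) * m \<le> m" using t \<open>0 \<le> m\<close> by (simp add: mult_left_le_one_le)
    ultimately have "- 2 * m \<le> t * \<psi> u" using m[OF t(3)] by (simp add: abs_le_iff)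
    moreover have "0 < norm u" using False by linarith
    ultimately have "- 2 * m * norm u \<le> \<psi> u"
      by (simp add: t_def pos_le_divide_eq mult_ac)
    then show ?thesis using \<open>0 \<le> m\<close> by simp
  qed
  have quad: "c / 4 * (norm u)\<^sup>2 - 4 * m\<^sup>2 / c - m \<le> c / 2 * (norm u)\<^sup>2 - m - 2 * m * norm u" for u
  proof -
    have "0 \<le> c / 4 * (norm u - 4 * m / c)\<^sup>2" using c by simp
    also have "\<dots> = c / 4 * (norm u)\<^sup>2 - 2 * m * norm u + 4 * m\<^sup>2 / c"
      using c by (simp add: power2_eq_square field_simps)
    finally show ?thesis by simp
  qed
  have "c / 4 * (norm u)\<^sup>2 - (m + 4 * m\<^sup>2 / c) \<le> F u" for u
    using quad[of u] lin[of u] unfolding \<psi>_def by linarith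
  then show ?thesis by blast
qed

lemma enn2real_nn_integral_exp_neg_pos_if_strongly_convex:
  fixes F :: "'e::euclidean_space \<Rightarrow> real"
  assumes F: "strongly_convex c F" and "0 < c"
  shows "0 < enn2real (\<integral>\<^sup>+w. ennreal (exp (- F w)) \<partial>lborel)"
proof -
  have "continuous_on UNIV (\<lambda>u. (F u - c / 2 * (norm u)\<^sup>2) + c / 2 * (norm u)\<^sup>2)"
    using convex_on_continuous[OF open_UNIV convex_on_minus_norm_squared_if_strongly_convex[OF F]]
    by (rule continuous_on_add) (intro continuous_intros)
  then have "F \<in> borel_measurable borel" by (simp add: borel_measurable_continuous_onI)
  moreover obtain K where "\<And>u. c / 4 * (norm u)\<^sup>2 - K \<le> F u"
    using strongly_convex_quadratic_lower_bound[OF F \<open>0 < c\<close>] by blast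
  ultimately show ?thesis
    using \<open>0 < c\<close> by (intro enn2real_nn_integral_exp_neg_pos[where a="c / 4" and K=K]) auto
qed

section \<open>The potential of \<open>\<pi>\<^sub>t\<close>\<close>

definition weighted_mean :: "('n::finite \<Rightarrow> 'm::finite \<Rightarrow> real) \<Rightarrow> 'a::real_vector^'n \<Rightarrow> 'm \<Rightarrow> 'a" where
  "weighted_mean \<sigma> x j = (1 / (\<Sum>i\<in>UNIV. \<sigma> i j)) *\<^sub>R (\<Sum>i\<in>UNIV. \<sigma> i j *\<^sub>R x $ i)"

definition interpolation_residual ::
  "real \<Rightarrow> ('n::finite \<Rightarrow> 'm::finite \<Rightarrow> real) \<Rightarrow> 'a::real_vector^'n \<Rightarrow> 'a^'m \<Rightarrow> 'a^'m \<Rightarrow> 'm \<Rightarrow> 'a" where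
  "interpolation_residual t \<sigma> x y z j = z $ j - t *\<^sub>R y $ j - (1 - t) *\<^sub>R weighted_mean \<sigma> x j"

definition joint_potential ::
  "real \<Rightarrow> real \<Rightarrow> ('n::finite \<Rightarrow> 'm::finite \<Rightarrow> real) \<Rightarrow> ('n \<Rightarrow> 'a::euclidean_space \<Rightarrow> real)
    \<Rightarrow> ('m \<Rightarrow> 'a \<Rightarrow> real) \<Rightarrow> ('a^'n) \<times> ('a^'m) \<times> ('a^'m) \<Rightarrow> real" where
  "joint_potential \<eta> t \<sigma> f g u = potential_t \<eta> t \<sigma> f g (fst u) (fst (snd u)) (snd (snd u))"

definition potential_modulus ::
  "real \<Rightarrow> real \<Rightarrow> ('n::finite \<Rightarrow> 'm::finite \<Rightarrow> real) \<Rightarrow> ('n \<Rightarrow> real) \<Rightarrow> ('m \<Rightarrow> real)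
    \<Rightarrow> ('a::real_inner^'n) \<times> ('a^'m) \<times> ('a^'m) \<Rightarrow> real" where
  "potential_modulus \<eta> t \<sigma> \<alpha>f \<alpha>g d =
     (\<Sum>i\<in>UNIV. \<alpha>f i / 2 * (norm (fst d $ i))\<^sup>2) + (\<Sum>j\<in>UNIV. \<alpha>g j / 2 * (norm (fst (snd d) $ j))\<^sup>2)
     + (\<Sum>j\<in>UNIV. (\<Sum>i\<in>UNIV. \<sigma> i j) / (2 * t * (1 - t) * \<eta>)
          * (norm (interpolation_residual t \<sigma> (fst d) (fst (snd d)) (snd (snd d)) j))\<^sup>2)"

lemma potential_t_eq:
  "potential_t \<eta> t \<sigma> f g x y z =
     (\<Sum>i\<in>UNIV. f i (x $ i)) + (\<Sum>j\<in>UNIV. g j (y $ j))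
     + (\<Sum>i\<in>UNIV. \<Sum>j\<in>UNIV. \<sigma> i j / (2 * \<eta>) * (norm (x $ i - y $ j))\<^sup>2)
     + (\<Sum>j\<in>UNIV. (\<Sum>i\<in>UNIV. \<sigma> i j) / (2 * t * (1 - t) * \<eta>) * (norm (interpolation_residual t \<sigma> x y z j))\<^sup>2)"
  by (simp add: potential_t_def interpolation_residual_def weighted_mean_def)

lemma linear_interpolation_residual:
  "linear (\<lambda>u. interpolation_residual t \<sigma> (fst u) (fst (snd u)) (snd (snd u)) j)"
  by (rule linearI)
    (simp_all add: interpolation_residual_def weighted_mean_def algebra_simps scaleR_sum_right sum.distrib)

lemma joint_potential_convex_with_modulus:
  fixes f :: "'n::finite \<Rightarrow> 'a::euclidean_space \<Rightarrow> real" and g :: "'m::finite \<Rightarrow> 'a \<Rightarrow> real"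
  assumes "0 < \<eta>" "0 < t" "t < 1" "\<And>i j. 0 \<le> \<sigma> i j"
    and f: "\<And>i. strongly_convex (\<alpha>f i) (f i)" and g: "\<And>j. strongly_convex (\<alpha>g j) (g j)"
  shows "convex_with_modulus (potential_modulus \<eta> t \<sigma> \<alpha>f \<alpha>g) (joint_potential \<eta> t \<sigma> f g)"
proof -
  have lin_x: "linear (\<lambda>u::('a^'n) \<times> ('a^'m) \<times> ('a^'m). fst u $ i)" for i
    by (rule linearI) simp_all
  have lin_y: "linear (\<lambda>u::('a^'n) \<times> ('a^'m) \<times> ('a^'m). fst (snd u) $ j)" for j
    by (rule linearI) simp_all
  have lin_xy: "linear (\<lambda>u::('a^'n) \<times> ('a^'m) \<times> ('a^'m). fst u $ i - fst (snd u) $ j)" for i j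
    by (rule linearI) (simp_all add: algebra_simps)
  have fF: "convex_with_modulus (\<lambda>d. \<Sum>i\<in>UNIV. \<alpha>f i / 2 * (norm (fst d $ i))\<^sup>2)
      (\<lambda>u::('a^'n) \<times> ('a^'m) \<times> ('a^'m). \<Sum>i\<in>UNIV. f i (fst u $ i))"
    by (rule convex_with_modulus_sum) (simp, rule strongly_convex_compose_linear[OF f lin_x])
  have fG: "convex_with_modulus (\<lambda>d. \<Sum>j\<in>UNIV. \<alpha>g j / 2 * (norm (fst (snd d) $ j))\<^sup>2)
      (\<lambda>u::('a^'n) \<times> ('a^'m) \<times> ('a^'m). \<Sum>j\<in>UNIV. g j (fst (snd u) $ j))"
    by (rule convex_with_modulus_sum) (simp, rule strongly_convex_compose_linear[OF g lin_y])
  \<comment> \<open>the coupling term is a positive semidefinite quadratic form, hence merely convex\<close>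
  have fC: "convex_with_modulus (\<lambda>d. \<Sum>i::'n\<in>UNIV. \<Sum>j::'m\<in>UNIV. 0)
      (\<lambda>u::('a^'n) \<times> ('a^'m) \<times> ('a^'m). \<Sum>i\<in>UNIV. \<Sum>j\<in>UNIV. \<sigma> i j / (2 * \<eta>) * (norm (fst u $ i - fst (snd u) $ j))\<^sup>2)"
  proof (intro convex_with_modulus_sum)
    fix i j
    have "0 \<le> \<sigma> i j / (2 * \<eta>)" using assms(1,4) by simp
    then show "convex_with_modulus (\<lambda>_. 0)
        (\<lambda>u::('a^'n) \<times> ('a^'m) \<times> ('a^'m). \<sigma> i j / (2 * \<eta>) * (norm (fst u $ i - fst (snd u) $ j))\<^sup>2)"
      by (intro convex_with_modulus_mono[OF convex_with_modulus_norm_squared_linear[OF lin_xy]]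
          mult_nonneg_nonneg) simp_all
  qed simp_all
  have fR: "convex_with_modulus
      (\<lambda>d. \<Sum>j\<in>UNIV. (\<Sum>i\<in>UNIV. \<sigma> i j) / (2 * t * (1 - t) * \<eta>)
          * (norm (interpolation_residual t \<sigma> (fst d) (fst (snd d)) (snd (snd d)) j))\<^sup>2)
      (\<lambda>u::('a^'n) \<times> ('a^'m) \<times> ('a^'m). \<Sum>j\<in>UNIV. (\<Sum>i\<in>UNIV. \<sigma> i j) / (2 * t * (1 - t) * \<eta>)
          * (norm (interpolation_residual t \<sigma> (fst u) (fst (snd u)) (snd (snd u)) j))\<^sup>2)"
    by (rule convex_with_modulus_sum)
      (simp, rule convex_with_modulus_norm_squared_linear[OF linear_interpolation_residual])
  from convex_with_modulus_add[OF convex_with_modulus_add[OF convex_with_modulus_add[OF fF fG] fC] fR]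
  show ?thesis
    unfolding joint_potential_def[abs_def] potential_t_eq potential_modulus_def[abs_def]
    by (simp only: sum.neutral_const add_0_right)
qed

lemma square_sum3_le_weighted:
  fixes A B C p q r :: real
  assumes "0 < A" "0 < B" "0 < C"
  shows "(p + q + r)\<^sup>2 \<le> (A + B + C) * (p\<^sup>2 / A + q\<^sup>2 / B + r\<^sup>2 / C)"
proof -
  define P Q R where "P = p / A" and "Q = q / B" and "R = r / C"
  have "p = A * P" "q = B * Q" "r = C * R" using assms by (simp_all add: P_def Q_def R_def)
  then have "(A + B + C) * (p\<^sup>2 / A + q\<^sup>2 / B + r\<^sup>2 / C) - (p + q + r)\<^sup>2
      = A * B * (P - Q)\<^sup>2 + A * C * (P - R)\<^sup>2 + B * C * (Q - R)\<^sup>2"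
    using assms by (simp add: power2_eq_square field_simps)
  moreover have "0 \<le> A * B * (P - Q)\<^sup>2 + A * C * (P - R)\<^sup>2 + B * C * (Q - R)\<^sup>2"
    using assms by simp
  ultimately show ?thesis by linarith
qed

lemma norm_add3_squared_le:
  fixes a b c :: "'a::real_normed_vector" and A B C :: real
  assumes "0 < A" "0 < B" "0 < C"
  shows "(norm (a + b + c))\<^sup>2 \<le> (A + B + C) * ((norm a)\<^sup>2 / A + (norm b)\<^sup>2 / B + (norm c)\<^sup>2 / C)"
proof -
  have "norm (a + b + c) \<le> norm a + norm b + norm c"
    by (metis add_mono norm_triangle_ineq order_refl order_trans)
  then have "(norm (a + b + c))\<^sup>2 \<le> (norm a + norm b + norm c)\<^sup>2" by (simp add: power_mono)
  also have "\<dots> \<le> (A + B + C) * ((norm a)\<^sup>2 / A + (norm b)\<^sup>2 / B + (norm c)\<^sup>2 / C)"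
    by (rule square_sum3_le_weighted[OF assms])
  finally show ?thesis .
qed

lemma norm_vec_squared: "(norm (z::'a::real_normed_vector^'m::finite))\<^sup>2 = (\<Sum>j\<in>UNIV. (norm (z $ j))\<^sup>2)"
  by (simp add: norm_vec_def L2_set_def sum_nonneg)

lemma norm_weighted_mean_squared_le:
  fixes x :: "'a::real_normed_vector^'n::finite"
  assumes "\<And>i. 0 \<le> \<sigma> i j" and "0 < (\<Sum>i\<in>UNIV. \<sigma> i j)"
  shows "(norm (weighted_mean \<sigma> x j))\<^sup>2 \<le> real CARD('n) * (norm x)\<^sup>2"
proof -
  let ?S = "\<Sum>i\<in>UNIV. \<sigma> i j"
  have "norm (weighted_mean \<sigma> x j) \<le> (1 / ?S) * (\<Sum>i\<in>UNIV. \<sigma> i j * norm (x $ i))"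
    using assms unfolding weighted_mean_def
    by (simp add: divide_right_mono order.trans[OF norm_sum] sum_nonneg)
  also have "\<dots> \<le> (\<Sum>i\<in>UNIV. norm (x $ i))"
    unfolding sum_distrib_left
  proof (rule sum_mono)
    fix i
    have "\<sigma> i j \<le> ?S" using assms(1) by (intro member_le_sum) auto
    then have "\<sigma> i j * norm (x $ i) \<le> ?S * norm (x $ i)" by (simp add: mult_right_mono)
    then show "1 / ?S * (\<sigma> i j * norm (x $ i)) \<le> norm (x $ i)"
      using assms(2) by (simp add: field_simps)
  qed
  finally have "(norm (weighted_mean \<sigma> x j))\<^sup>2 \<le> (\<Sum>i\<in>UNIV. 1 * norm (x $ i))\<^sup>2"
    by (simp add: power_mono)
  also have "\<dots> \<le> real CARD('n) * (\<Sum>i\<in>UNIV. (norm (x $ i))\<^sup>2)"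
    using Cauchy_Schwarz_ineq_sum[of "\<lambda>_. 1" "\<lambda>i. norm (x $ i)" UNIV] by simp
  finally show ?thesis by (simp add: norm_vec_squared)
qed

lemma min_range_pos: "(\<And>i. 0 < h i) \<Longrightarrow> 0 < Min (range (h :: 'i::finite \<Rightarrow> real))"
  using Min_in[of "range h"] by auto

definition marginal_constant ::
  "real \<Rightarrow> real \<Rightarrow> ('n::finite \<Rightarrow> 'm::finite \<Rightarrow> real) \<Rightarrow> ('n \<Rightarrow> real) \<Rightarrow> ('m \<Rightarrow> real) \<Rightarrow> real" where
  "marginal_constant \<eta> t \<sigma> \<alpha>f \<alpha>g =
     1 / (\<eta> * t * (1 - t) / Min (range (\<lambda>j. \<Sum>i\<in>UNIV. \<sigma> i j))
          + real (CARD('m) * CARD('n)) * (1 - t)\<^sup>2 / Min (range \<alpha>f) + t\<^sup>2 / Min (range \<alpha>g))"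

lemma marginal_constant_pos:
  assumes "0 < \<eta>" "0 < t" "t < 1" "\<And>i. 0 < \<alpha>f i" "\<And>j. 0 < \<alpha>g j" "\<And>j. 0 < (\<Sum>i\<in>UNIV. \<sigma> i j)"
  shows "0 < marginal_constant \<eta> t \<sigma> \<alpha>f \<alpha>g"
  unfolding marginal_constant_def using assms
  by (intro divide_pos_pos add_pos_pos mult_pos_pos min_range_pos) auto

lemma potential_modulus_ge_norm_squared_z:
  fixes d :: "('a::real_inner^'n::finite) \<times> ('a^'m::finite) \<times> ('a^'m)"
  assumes \<eta>: "0 < \<eta>" and t: "0 < t" "t < 1"
    and \<alpha>f: "\<And>i. 0 < \<alpha>f i" and \<alpha>g: "\<And>j. 0 < \<alpha>g j"
    and \<sigma>: "\<And>i j. 0 \<le> \<sigma> i j" and S: "\<And>j. 0 < (\<Sum>i\<in>UNIV. \<sigma> i j)"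
  shows "marginal_constant \<eta> t \<sigma> \<alpha>f \<alpha>g / 2 * (norm (snd (snd d)))\<^sup>2
    \<le> potential_modulus \<eta> t \<sigma> \<alpha>f \<alpha>g d"
proof -
  obtain x y z where d: "d = (x, y, z)" by (cases d) auto
  define Sm Fm Gm where "Sm = Min (range (\<lambda>j. \<Sum>i\<in>UNIV. \<sigma> i j))"
    and "Fm = Min (range \<alpha>f)" and "Gm = Min (range \<alpha>g)"
  define N where "N = real (CARD('m) * CARD('n))"
  define A B C where "A = \<eta> * t * (1 - t) / Sm" and "B = N * (1 - t)\<^sup>2 / Fm" and "C = t\<^sup>2 / Gm"
  define e where "e j = interpolation_residual t \<sigma> x y z j" for j
  have Sm: "0 < Sm" "Sm \<le> (\<Sum>i\<in>UNIV. \<sigma> i j)" for j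
    using S by (auto simp: Sm_def min_range_pos)
  have Fm: "0 < Fm" "Fm \<le> \<alpha>f i" for i using \<alpha>f by (auto simp: Fm_def min_range_pos)
  have Gm: "0 < Gm" "Gm \<le> \<alpha>g j" for j using \<alpha>g by (auto simp: Gm_def min_range_pos)
  have "0 < N" by (simp add: N_def)
  have ABC: "0 < A" "0 < B" "0 < C" using \<eta> t Sm Fm Gm \<open>0 < N\<close> by (simp_all add: A_def B_def C_def)
  \<comment> \<open>\<open>A + B + C = 1 / c\<^sub>t\<close>: a weighted Cauchy--Schwarz bound for the splitting of \<open>z\<^sup>j\<close>
    into the residual \<open>e j\<close>, \<open>1 - t\<close> times the weighted mean of \<open>x\<close>, and \<open>t y\<^sub>j\<close>\<close>
  have per_j: "(norm (z $ j))\<^sup>2 / (A + B + C)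
      \<le> (\<Sum>i\<in>UNIV. \<sigma> i j) / (\<eta> * t * (1 - t)) * (norm (e j))\<^sup>2
        + Fm / N * (norm (weighted_mean \<sigma> x j))\<^sup>2 + \<alpha>g j * (norm (y $ j))\<^sup>2" for j
  proof -
    have "z $ j = e j + (1 - t) *\<^sub>R weighted_mean \<sigma> x j + t *\<^sub>R y $ j"
      by (simp add: e_def interpolation_residual_def)
    then have "(norm (z $ j))\<^sup>2 / (A + B + C)
        \<le> (norm (e j))\<^sup>2 / A + (norm ((1 - t) *\<^sub>R weighted_mean \<sigma> x j))\<^sup>2 / B + (norm (t *\<^sub>R y $ j))\<^sup>2 / C"
      using norm_add3_squared_le[OF ABC, of "e j" "(1 - t) *\<^sub>R weighted_mean \<sigma> x j" "t *\<^sub>R y $ j"] ABC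
      by (simp add: pos_divide_le_eq mult.commute)
    also have "\<dots> = Sm / (\<eta> * t * (1 - t)) * (norm (e j))\<^sup>2
        + Fm / N * (norm (weighted_mean \<sigma> x j))\<^sup>2 + Gm * (norm (y $ j))\<^sup>2"
      using t Fm(1) \<open>0 < N\<close> Gm(1) by (simp add: A_def B_def C_def power_mult_distrib mult_ac)
    also have "\<dots> \<le> (\<Sum>i\<in>UNIV. \<sigma> i j) / (\<eta> * t * (1 - t)) * (norm (e j))\<^sup>2
        + Fm / N * (norm (weighted_mean \<sigma> x j))\<^sup>2 + \<alpha>g j * (norm (y $ j))\<^sup>2"
      using Sm Gm \<eta> t \<open>0 < N\<close> by (intro add_mono mult_right_mono divide_right_mono) auto
    finally show ?thesis .
  qed
  have "(\<Sum>j\<in>UNIV. Fm / N * (norm (weighted_mean \<sigma> x j))\<^sup>2) \<le> (\<Sum>j::'m\<in>UNIV. Fm / N * (real CARD('n) * (norm x)\<^sup>2))"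
    using Fm \<open>0 < N\<close> \<sigma> S by (intro sum_mono mult_left_mono norm_weighted_mean_squared_le) auto
  also have "\<dots> = Fm * (\<Sum>i\<in>UNIV. (norm (x $ i))\<^sup>2)"
    using \<open>0 < N\<close> by (simp add: N_def norm_vec_squared)
  also have "\<dots> \<le> (\<Sum>i\<in>UNIV. \<alpha>f i * (norm (x $ i))\<^sup>2)"
    unfolding sum_distrib_left using Fm by (intro sum_mono mult_right_mono) auto
  finally have mean_bound: "(\<Sum>j\<in>UNIV. Fm / N * (norm (weighted_mean \<sigma> x j))\<^sup>2)
    \<le> (\<Sum>i\<in>UNIV. \<alpha>f i * (norm (x $ i))\<^sup>2)" .
  have "(norm z)\<^sup>2 / (A + B + C) = (\<Sum>j\<in>UNIV. (norm (z $ j))\<^sup>2 / (A + B + C))"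
    by (simp add: norm_vec_squared sum_divide_distrib)
  also have "\<dots> \<le> (\<Sum>j\<in>UNIV. (\<Sum>i\<in>UNIV. \<sigma> i j) / (\<eta> * t * (1 - t)) * (norm (e j))\<^sup>2
        + Fm / N * (norm (weighted_mean \<sigma> x j))\<^sup>2 + \<alpha>g j * (norm (y $ j))\<^sup>2)"
    by (rule sum_mono) (rule per_j)
  also have "\<dots> \<le> (\<Sum>j\<in>UNIV. (\<Sum>i\<in>UNIV. \<sigma> i j) / (\<eta> * t * (1 - t)) * (norm (e j))\<^sup>2)
        + (\<Sum>i\<in>UNIV. \<alpha>f i * (norm (x $ i))\<^sup>2) + (\<Sum>j\<in>UNIV. \<alpha>g j * (norm (y $ j))\<^sup>2)"
    using mean_bound by (simp add: sum.distrib)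
  also have "\<dots> = 2 * potential_modulus \<eta> t \<sigma> \<alpha>f \<alpha>g d"
  proof -
    have "a / (\<eta> * t * (1 - t)) * b = 2 * (a / (2 * t * (1 - t) * \<eta>) * b)" for a b :: real
      using \<eta> t by (simp add: field_simps)
    then show ?thesis by (simp add: d e_def potential_modulus_def sum_distrib_left distrib_left mult_ac)
  qed
  finally have "(norm z)\<^sup>2 / (A + B + C) \<le> 2 * potential_modulus \<eta> t \<sigma> \<alpha>f \<alpha>g d" .
  then have "(norm z)\<^sup>2 / (A + B + C) / 2 \<le> 2 * potential_modulus \<eta> t \<sigma> \<alpha>f \<alpha>g d / 2"
    by (rule divide_right_mono) simp
  then have "1 / (A + B + C) / 2 * (norm z)\<^sup>2 \<le> potential_modulus \<eta> t \<sigma> \<alpha>f \<alpha>g d"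
    by simp
  then show ?thesis by (simp only: d A_def B_def C_def Sm_def Fm_def Gm_def N_def snd_conv marginal_constant_def)
qed

lemma potential_modulus_ge_norm_squared_xy:
  fixes d :: "('a::real_inner^'n::finite) \<times> ('a^'m::finite) \<times> ('a^'m)"
  assumes "0 < \<eta>" "0 < t" "t < 1" "\<And>i. 0 < \<alpha>f i" "\<And>j. 0 < \<alpha>g j" "\<And>i j. 0 \<le> \<sigma> i j"
  shows "min (Min (range \<alpha>f)) (Min (range \<alpha>g)) / 2 * ((norm (fst d))\<^sup>2 + (norm (fst (snd d)))\<^sup>2)
    \<le> potential_modulus \<eta> t \<sigma> \<alpha>f \<alpha>g d"
proof -
  define m where "m = min (Min (range \<alpha>f)) (Min (range \<alpha>g))"
  have "m \<le> \<alpha>f i" "m \<le> \<alpha>g j" for i j by (auto simp: m_def intro: min.coboundedI1 min.coboundedI2)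
  then have "m / 2 * (norm (fst d))\<^sup>2 \<le> (\<Sum>i\<in>UNIV. \<alpha>f i / 2 * (norm (fst d $ i))\<^sup>2)"
    and "m / 2 * (norm (fst (snd d)))\<^sup>2 \<le> (\<Sum>j\<in>UNIV. \<alpha>g j / 2 * (norm (fst (snd d) $ j))\<^sup>2)"
    by (simp_all add: norm_vec_squared sum_distrib_left sum_mono mult_right_mono divide_right_mono)
  moreover have "0 \<le> (\<Sum>j\<in>UNIV. (\<Sum>i\<in>UNIV. \<sigma> i j) / (2 * t * (1 - t) * \<eta>)
          * (norm (interpolation_residual t \<sigma> (fst d) (fst (snd d)) (snd (snd d)) j))\<^sup>2)"
    using assms by (intro sum_nonneg mult_nonneg_nonneg divide_nonneg_pos) auto
  ultimately show ?thesis by (simp add: potential_modulus_def m_def distrib_left)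
qed

lemma joint_potential_strongly_convex:
  fixes f :: "'n::finite \<Rightarrow> 'a::euclidean_space \<Rightarrow> real" and g :: "'m::finite \<Rightarrow> 'a \<Rightarrow> real"
  assumes "0 < \<eta>" "0 < t" "t < 1" "\<And>i. 0 < \<alpha>f i" "\<And>j. 0 < \<alpha>g j"
    "\<And>i j. 0 \<le> \<sigma> i j" "\<And>j. 0 < (\<Sum>i\<in>UNIV. \<sigma> i j)"
    "\<And>i. strongly_convex (\<alpha>f i) (f i)" "\<And>j. strongly_convex (\<alpha>g j) (g j)"
  shows "strongly_convex (min (min (Min (range \<alpha>f)) (Min (range \<alpha>g))) (marginal_constant \<eta> t \<sigma> \<alpha>f \<alpha>g) / 2)
    (joint_potential \<eta> t \<sigma> f g)"
  unfolding strongly_convex_iff_convex_with_modulus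
proof (rule convex_with_modulus_mono[OF joint_potential_convex_with_modulus[OF assms(1-3,6,8,9)]])
  fix d :: "('a^'n) \<times> ('a^'m) \<times> ('a^'m)"
  define m c where "m = min (Min (range \<alpha>f)) (Min (range \<alpha>g))" and "c = marginal_constant \<eta> t \<sigma> \<alpha>f \<alpha>g"
  have "(norm d)\<^sup>2 = (norm (fst d))\<^sup>2 + (norm (fst (snd d)))\<^sup>2 + (norm (snd (snd d)))\<^sup>2"
    by (cases d) (simp add: norm_Pair)
  moreover have "min m c / 4 * ((norm (fst d))\<^sup>2 + (norm (fst (snd d)))\<^sup>2) \<le> m / 4 * ((norm (fst d))\<^sup>2 + (norm (fst (snd d)))\<^sup>2)"
    "min m c / 4 * (norm (snd (snd d)))\<^sup>2 \<le> c / 4 * (norm (snd (snd d)))\<^sup>2"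
    by (simp_all add: mult_right_mono divide_right_mono)
  moreover have "m / 2 * ((norm (fst d))\<^sup>2 + (norm (fst (snd d)))\<^sup>2) \<le> potential_modulus \<eta> t \<sigma> \<alpha>f \<alpha>g d"
    unfolding m_def using assms by (intro potential_modulus_ge_norm_squared_xy) auto
  moreover have "c / 2 * (norm (snd (snd d)))\<^sup>2 \<le> potential_modulus \<eta> t \<sigma> \<alpha>f \<alpha>g d"
    unfolding c_def using assms by (intro potential_modulus_ge_norm_squared_z) auto
  ultimately show "min m c / 2 / 2 * (norm d)\<^sup>2 \<le> potential_modulus \<eta> t \<sigma> \<alpha>f \<alpha>g d"
    by (simp add: algebra_simps)
qed

lemma joint_potential_minus_norm_squared_convex:
  fixes f :: "'n::finite \<Rightarrow> 'a::euclidean_space \<Rightarrow> real" and g :: "'m::finite \<Rightarrow> 'a \<Rightarrow> real"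
  assumes "0 < \<eta>" "0 < t" "t < 1" "\<And>i. 0 < \<alpha>f i" "\<And>j. 0 < \<alpha>g j"
    "\<And>i j. 0 \<le> \<sigma> i j" "\<And>j. 0 < (\<Sum>i\<in>UNIV. \<sigma> i j)"
    "\<And>i. strongly_convex (\<alpha>f i) (f i)" "\<And>j. strongly_convex (\<alpha>g j) (g j)"
  shows "convex_on UNIV (\<lambda>u. joint_potential \<eta> t \<sigma> f g u
    - marginal_constant \<eta> t \<sigma> \<alpha>f \<alpha>g / 2 * (norm (snd (snd u)))\<^sup>2)"
proof -
  define c where "c = marginal_constant \<eta> t \<sigma> \<alpha>f \<alpha>g"
  have lin: "linear (\<lambda>u::('a^'n) \<times> ('a^'m) \<times> ('a^'m). snd (snd u))" by (rule linearI) simp_all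
  have "convex_with_modulus (\<lambda>d. c / 2 * (norm (snd (snd d)))\<^sup>2) (joint_potential \<eta> t \<sigma> f g)"
  proof (rule convex_with_modulus_mono[OF joint_potential_convex_with_modulus[OF assms(1-3,6,8,9)]])
    show "c / 2 * (norm (snd (snd d)))\<^sup>2 \<le> potential_modulus \<eta> t \<sigma> \<alpha>f \<alpha>g d" for d
      unfolding c_def by (rule potential_modulus_ge_norm_squared_z) (use assms in auto)
  qed
  from convex_with_modulus_add[OF this convex_with_modulus_norm_squared_linear[OF lin, of "- (c / 2)"]]
  show ?thesis by (simp flip: c_def convex_with_modulus_zero_iff)
qed

section \<open>Strong log-concavity of the marginal\<close>

lemma strongly_log_concave_gaussian_factor:
  fixes M :: "'a::real_inner \<Rightarrow> real"
  assumes "0 < c" "0 < Z" "\<And>z. 0 < M z" "convex_on UNIV (\<lambda>z. - ln (M z))"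
  shows "strongly_log_concave c (\<lambda>z. exp (- c / 2 * (norm z)\<^sup>2) * M z / Z)"
proof -
  have "convex_on UNIV (\<lambda>z. - ln (M z) + ln Z)"
    using assms(4) by (intro convex_on_add) (simp_all add: convex_on_const)
  then have "convex_with_modulus (\<lambda>_. 0) (\<lambda>z. - ln (M z) + ln Z)"
    by (simp add: convex_with_modulus_zero_iff)
  from convex_with_modulus_add[OF convex_with_modulus_norm_squared[of "c / 2"] this]
  have "convex_with_modulus (\<lambda>d. c / 2 * (norm d)\<^sup>2) (\<lambda>z. c / 2 * (norm z)\<^sup>2 + (- ln (M z) + ln Z))"
    by simp
  moreover have "- ln (exp (- c / 2 * (norm z)\<^sup>2) * M z / Z) = c / 2 * (norm z)\<^sup>2 + (- ln (M z) + ln Z)" for z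
    using assms(2) assms(3)[of z] by (simp add: ln_mult ln_div)
  ultimately show ?thesis
    using assms(1-3) by (simp add: strongly_log_concave_def strongly_convex_iff_convex_with_modulus)
qed

lemma strongly_log_concave_marginal:
  fixes U :: "'e::euclidean_space \<times> 'v::real_inner \<Rightarrow> real"
  assumes conv: "convex_on UNIV (\<lambda>p. U p - c / 2 * (norm (snd p))\<^sup>2)" and "0 < c"
    and a: "0 < a" and coercive: "\<And>p. a * (norm p)\<^sup>2 - K \<le> U p" and "0 < Z"
  shows "strongly_log_concave c (\<lambda>z. enn2real (\<integral>\<^sup>+w. ennreal (exp (- U (w, z))) \<partial>lborel) / Z)"
proof -
  define \<Psi> where "\<Psi> p = U p - c / 2 * (norm (snd p))\<^sup>2" for p
  define M where "M z = enn2real (\<integral>\<^sup>+w. ennreal (exp (- \<Psi> (w, z))) \<partial>lborel)" for z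
  have \<Psi>_coercive: "a * (norm w)\<^sup>2 - (K + c / 2 * (norm z)\<^sup>2) \<le> \<Psi> (w, z)" for w z
  proof -
    have "a * (norm w)\<^sup>2 \<le> a * (norm (w, z))\<^sup>2"
      using a by (intro mult_left_mono) (auto simp: norm_Pair)
    then show ?thesis using coercive[of "(w, z)"] by (simp add: \<Psi>_def)
  qed
  have \<Psi>_meas: "(\<lambda>w. \<Psi> (w, z)) \<in> borel_measurable borel" for z
    using convex_on_slice[OF conv[folded \<Psi>_def]]
    by (intro borel_measurable_continuous_onI convex_on_continuous) simp_all
  have M_convex: "convex_on UNIV (\<lambda>z. - ln (M z))"
    unfolding M_def using \<Psi>_coercive by (intro prekopa[OF conv[folded \<Psi>_def] a]) blast
  have M_pos: "0 < M z" for z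
    unfolding M_def using \<Psi>_coercive a by (intro enn2real_nn_integral_exp_neg_pos[OF \<Psi>_meas]) blast+
  have "enn2real (\<integral>\<^sup>+w. ennreal (exp (- U (w, z))) \<partial>lborel) = exp (- c / 2 * (norm z)\<^sup>2) * M z" for z
  proof -
    have "ennreal (exp (- U (w, z))) = ennreal (exp (- c / 2 * (norm z)\<^sup>2)) * ennreal (exp (- \<Psi> (w, z)))" for w
      by (simp add: \<Psi>_def ennreal_mult[symmetric] flip: exp_add)
    then show ?thesis
      using \<Psi>_meas[of z] by (simp add: M_def nn_integral_cmult enn2real_mult)
  qed
  then show ?thesis
    using strongly_log_concave_gaussian_factor[OF \<open>0 < c\<close> \<open>0 < Z\<close> M_pos M_convex] by simp
qed

theorem mainTheorem8:
  fixes \<eta> t :: real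
    and \<sigma> :: "'n::finite \<Rightarrow> 'm::finite \<Rightarrow> real"
    and f :: "'n \<Rightarrow> 'a::euclidean_space \<Rightarrow> real"
    and g :: "'m \<Rightarrow> 'a \<Rightarrow> real"
    and \<alpha>f :: "'n \<Rightarrow> real" and \<alpha>g :: "'m \<Rightarrow> real"
  assumes "\<eta> > 0" and "0 < t" and "t < 1"
    and "\<And>i. \<alpha>f i > 0" and "\<And>i. strongly_convex (\<alpha>f i) (f i)"
    and "\<And>j. \<alpha>g j > 0" and "\<And>j. strongly_convex (\<alpha>g j) (g j)"
    and "\<And>i j. 0 \<le> \<sigma> i j \<and> \<sigma> i j \<le> 1"
    and "\<And>j. (\<Sum>i\<in>UNIV. \<sigma> i j) > 0"
    and "\<And>i. (\<Sum>j\<in>UNIV. \<sigma> i j) > 0"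
  shows "strongly_log_concave
           (1 / (\<eta> * t * (1 - t) / Min (range (\<lambda>j. \<Sum>i\<in>UNIV. \<sigma> i j))
                 + real (CARD('m) * CARD('n)) * (1 - t)\<^sup>2 / Min (range \<alpha>f)
                 + t\<^sup>2 / Min (range \<alpha>g)))
           (z_marginal \<eta> t \<sigma> f g)"
proof -
  \<comment> \<open>neither \<open>\<sigma> i j \<le> 1\<close> nor the positivity of the row sums \<open>\<Sum>j. \<sigma> i j\<close> is needed\<close>
  note hyps = assms(1-4,6) conjunct1[OF assms(8)] assms(9,5,7)
  define c V where "c = marginal_constant \<eta> t \<sigma> \<alpha>f \<alpha>g" and "V = joint_potential \<eta> t \<sigma> f g"
  define U where "U p = V (fst (fst p), snd (fst p), snd p)" for p :: "(('a^'n) \<times> ('a^'m)) \<times> ('a^'m)"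
  define \<kappa> where "\<kappa> = min (min (Min (range \<alpha>f)) (Min (range \<alpha>g))) c / 2"
  have "0 < c" "0 < \<kappa>" using hyps by (simp_all add: c_def \<kappa>_def min_range_pos marginal_constant_pos)
  have V: "strongly_convex \<kappa> V" unfolding \<kappa>_def c_def V_def using hyps by (rule joint_potential_strongly_convex)
  obtain K where K: "\<And>u. \<kappa> / 4 * (norm u)\<^sup>2 - K \<le> V u"
    using strongly_convex_quadratic_lower_bound[OF V \<open>0 < \<kappa>\<close>] by blast
  have "linear (\<lambda>p::(('a^'n) \<times> ('a^'m)) \<times> ('a^'m). (fst (fst p), snd (fst p), snd p))"
    by (rule linearI) simp_all
  from convex_on_compose_linear[OF this joint_potential_minus_norm_squared_convex[OF hyps]]
  have conv: "convex_on UNIV (\<lambda>p. U p - c / 2 * (norm (snd p))\<^sup>2)" by (simp add: U_def V_def c_def)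
  have coercive: "\<kappa> / 4 * (norm p)\<^sup>2 - K \<le> U p" for p
    using K[of "(fst (fst p), snd (fst p), snd p)"] by (cases p) (auto simp: U_def norm_Pair add.assoc)
  have "0 < enn2real (\<integral>\<^sup>+u. ennreal (exp (- V u)) \<partial>lborel)"
    using V \<open>0 < \<kappa>\<close> by (rule enn2real_nn_integral_exp_neg_pos_if_strongly_convex)
  with strongly_log_concave_marginal[OF conv \<open>0 < c\<close> _ coercive] \<open>0 < \<kappa>\<close>
  have "strongly_log_concave c
      (\<lambda>z. enn2real (\<integral>\<^sup>+w. ennreal (exp (- U (w, z))) \<partial>lborel) / enn2real (\<integral>\<^sup>+u. ennreal (exp (- V u)) \<partial>lborel))"
    by simp
  moreover have "z_marginal \<eta> t \<sigma> f g = (\<lambda>z. enn2real (\<integral>\<^sup>+w. ennreal (exp (- U (w, z))) \<partial>lborel)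
      / enn2real (\<integral>\<^sup>+u. ennreal (exp (- V u)) \<partial>lborel))"
    by (simp add: fun_eq_iff z_marginal_def U_def V_def joint_potential_def)
  ultimately show ?thesis unfolding c_def marginal_constant_def by simp
qed

end
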